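(* Let $\Omega_\Gamma\subset\mathbb{R}^2$ be a bounded simply connected domain with analytic boundary and $\psi$ real-analytic on $\overline{\Omega_\Gamma}$, non-negative, with $\Delta\psi=F(\psi)$ in $\Omega_\Gamma$, where $F\in C([0,1])$ is real-analytic on $(0,1)$, not real-analytic at $0$, and $F(0)=1$; and $\psi=\nabla\psi=0$ on $\partial\Omega_\Gamma$. Then near $0$, $F$ admits the convergent Puiseux expansion $F(s)=\sum_{k\ge0}a_ks^{k/2}$ for $0\le s$ sufficiently small, with real $a_k$, $a_0=1$, and $a_{k}\ne0$ for at least one odd $k$. *)

theory Defs
  imports "HOL-Analysis.Analysis"
begin

definition real_analytic_at :: "(real \<Rightarrow> real) \<Rightarrow> real \<Rightarrow> bool" where
  "real_analytic_at f x0 \<longleftrightarrow>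
     (\<exists>c :: nat \<Rightarrow> real. \<exists>r > 0. \<forall>x. \<bar>x - x0\<bar> < r \<longrightarrow>
        (\<lambda>n. c n * (x - x0) ^ n) sums f x)"

text \<open>Real-analyticity at 0 of a function only given on [0,1] (one-sided):
  given near 0 (on [0,r)) by a convergent power series.\<close>
definition real_analytic_at_0_right :: "(real \<Rightarrow> real) \<Rightarrow> bool" where
  "real_analytic_at_0_right f \<longleftrightarrow>
     (\<exists>c :: nat \<Rightarrow> real. \<exists>r > 0. \<forall>x. 0 \<le> x \<and> x < r \<longrightarrow>
        (\<lambda>n. c n * x ^ n) sums f x)"

definition real_analytic_at2 :: "(real \<times> real \<Rightarrow> real) \<Rightarrow> real \<times> real \<Rightarrow> bool" where
  "real_analytic_at2 f p0 \<longleftrightarrow>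
     (\<exists>c :: nat \<Rightarrow> nat \<Rightarrow> real. \<exists>r > 0. \<forall>x y. dist (x, y) p0 < r \<longrightarrow>
        ((\<lambda>(i, j). c i j * (x - fst p0) ^ i * (y - snd p0) ^ j) has_sum f (x, y)) UNIV)"

definition laplacian :: "(real \<times> real \<Rightarrow> real) \<Rightarrow> real \<times> real \<Rightarrow> real" where
  "laplacian f p =
     deriv (\<lambda>s. deriv (\<lambda>s'. f (s', snd p)) s) (fst p)
   + deriv (\<lambda>t. deriv (\<lambda>t'. f (fst p, t')) t) (snd p)"

definition analytic_boundary :: "(real \<times> real) set \<Rightarrow> bool" where
  "analytic_boundary \<Omega> \<longleftrightarrow>
     (\<exists>\<gamma> :: real \<Rightarrow> real \<times> real.
        (\<forall>t. real_analytic_at (\<lambda>s. fst (\<gamma> s)) t \<and> real_analytic_at (\<lambda>s. snd (\<gamma> s)) t) \<and>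
        (\<forall>t. \<gamma> (t + 1) = \<gamma> t) \<and>
        inj_on \<gamma> {0..<1} \<and>
        (\<forall>t. \<exists>v. v \<noteq> 0 \<and> (\<gamma> has_vector_derivative v) (at t)) \<and>
        frontier \<Omega> = \<gamma> ` {0..1})"

end

theory Submission
  imports Defs "HOL-Complex_Analysis.Complex_Analysis"
begin

text \<open>Let p be the boundary point nearest to an interior point q and v = (q - p) / norm (q - p)
  the inner normal there. Since psi and its gradient vanish at p, psi starts with a quadratic
  form Q. As psi vanishes along the boundary curve, Q vanishes on its tangent, which is orthogonal
  to v; hence Q v = trace Q = (laplacian psi) p / 2 = F 0 / 2 = 1/2. Along the normal segment
  psi (p + t v) = t^2 h t with h analytic and h 0 = 1/2, while F (t^2 h t) = (laplacian psi)
  (p + t v) is analytic in t. The substitution sigma = t * sqrt (h t) is analytically invertible,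
  so F (sigma^2) is analytic in sigma, i.e. F is a power series in sqrt s; were all odd
  coefficients zero, F would be analytic at 0.\<close>

section \<open>Double power series\<close>

definition dpowser :: "(nat \<Rightarrow> nat \<Rightarrow> real) \<Rightarrow> real \<Rightarrow> real \<Rightarrow> real" where
  "dpowser c x y = (\<Sum>\<^sub>\<infinity>(i,j). c i j * x^i * y^j)"

abbreviation dpowser_abs_summable :: "(nat \<Rightarrow> nat \<Rightarrow> real) \<Rightarrow> real \<Rightarrow> bool" where
  "dpowser_abs_summable c \<rho> \<equiv> (\<lambda>(i,j). \<bar>c i j\<bar> * \<rho>^(i+j)) summable_on UNIV"

lemma dpowser_terms_abs_summable:
  assumes AS: "dpowser_abs_summable c \<rho>" and x: "\<bar>x\<bar> \<le> \<rho>" and y: "\<bar>y\<bar> \<le> \<rho>"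
  shows "(\<lambda>ij. norm ((\<lambda>(i,j). c i j * x^i * y^j) ij)) summable_on UNIV"
proof -
  have "(\<lambda>ij. norm ((\<lambda>(i,j). \<bar>c i j\<bar> * \<rho>^(i+j)) ij)) summable_on UNIV"
    using summable_on_iff_abs_summable_on_real[THEN iffD1, OF AS] .
  then show ?thesis
  proof (rule Infinite_Sum.abs_summable_on_comparison_test)
    fix ij :: "nat \<times> nat"
    obtain i j where ij: "ij = (i,j)" by fastforce
    have r: "0 \<le> \<rho>" using x by linarith
    have "\<bar>c i j * x^i * y^j\<bar> = \<bar>c i j\<bar> * \<bar>x\<bar>^i * \<bar>y\<bar>^j" by (simp add: abs_mult power_abs)
    also have "\<dots> \<le> \<bar>c i j\<bar> * \<rho>^i * \<rho>^j"
      using x y r by (intro mult_left_mono mult_mono power_mono) auto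
    also have "\<dots> = \<bar>\<bar>c i j\<bar> * \<rho>^(i+j)\<bar>" using r by (simp add: power_add abs_mult)
    finally show "norm ((\<lambda>(i,j). c i j * x^i * y^j) ij) \<le> norm ((\<lambda>(i,j). \<bar>c i j\<bar> * \<rho>^(i+j)) ij)"
      by (simp add: ij)
  qed
qed

lemma has_sum_dpowser:
  assumes "dpowser_abs_summable c \<rho>" and "\<bar>x\<bar> \<le> \<rho>" and "\<bar>y\<bar> \<le> \<rho>"
  shows "((\<lambda>(i,j). c i j * x^i * y^j) has_sum dpowser c x y) UNIV"
  unfolding dpowser_def
  by (rule has_sum_infsum, rule abs_summable_summable, rule dpowser_terms_abs_summable[OF assms])

lemma dpowser_row_summable:
  assumes AS: "dpowser_abs_summable c \<rho>" and r: "\<rho> > 0" and y: "\<bar>y\<bar> \<le> \<rho>"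
  shows "(\<lambda>j. c i j * y^j) summable_on UNIV"
proof -
  have "(\<lambda>(i,j). norm (c i j * \<rho>^i * y^j)) summable_on Sigma UNIV (\<lambda>_. UNIV)"
    using dpowser_terms_abs_summable[OF AS _ y, of \<rho>] r by (simp add: case_prod_unfold)
  from summable_on_SigmaD1[OF this, of i]
  have "(\<lambda>j. c i j * \<rho>^i * y^j) summable_on UNIV"
    by (simp add: summable_on_iff_abs_summable_on_real[of "\<lambda>j. c i j * \<rho>^i * y^j"])
  then have "(\<lambda>j. inverse (\<rho>^i) * (c i j * \<rho>^i * y^j)) summable_on UNIV"
    by (rule summable_on_cmult_right)
  moreover have "\<And>j. inverse (\<rho>^i) * (c i j * \<rho>^i * y^j) = c i j * y^j"
    using r by (simp add: field_simps)
  ultimately show ?thesis by simp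
qed

lemma has_sum_dpowser_rows:
  assumes AS: "dpowser_abs_summable c \<rho>"
    and r: "\<rho> > 0" and x: "\<bar>x\<bar> \<le> \<rho>" and y: "\<bar>y\<bar> \<le> \<rho>"
  shows "((\<lambda>i. (\<Sum>\<^sub>\<infinity>j. c i j * y^j) * x^i) has_sum dpowser c x y) UNIV"
proof -
  have "((\<lambda>(i,j). c i j * x^i * y^j) has_sum dpowser c x y) (Sigma UNIV (\<lambda>_. UNIV))"
    using has_sum_dpowser[OF AS x y] by simp
  then show ?thesis
  proof (rule has_sum_Sigma')
    fix i :: nat
    have "((\<lambda>j. c i j * y^j) has_sum (\<Sum>\<^sub>\<infinity>j. c i j * y^j)) UNIV"
      using dpowser_row_summable[OF AS r y] by (rule has_sum_infsum)
    then have "((\<lambda>j. x^i * (c i j * y^j)) has_sum x^i * (\<Sum>\<^sub>\<infinity>j. c i j * y^j)) UNIV"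
      by (rule has_sum_cmult_right)
    then show "((\<lambda>j. (\<lambda>(i,j). c i j * x^i * y^j) (i, j)) has_sum (\<Sum>\<^sub>\<infinity>j. c i j * y^j) * x^i) UNIV"
      by (simp add: ac_simps)
  qed
qed

lemma has_sum_diagonals:
  fixes f :: "nat \<times> nat \<Rightarrow> real"
  assumes "(f has_sum S) UNIV"
  shows "((\<lambda>m. \<Sum>i\<le>m. f (i, m - i)) has_sum S) UNIV"
proof -
  have "bij_betw (\<lambda>(m,i). (i, m - i)) (Sigma UNIV (\<lambda>m. {..m})) (UNIV :: (nat \<times> nat) set)"
    by (rule bij_betwI[where g="\<lambda>(i,j). (i+j, i)"]) auto
  then have "((\<lambda>(m,i). f (i, m - i)) has_sum S) (Sigma UNIV (\<lambda>m. {..m}))"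
    using has_sum_reindex_bij_betw assms by (fastforce simp: case_prod_unfold)
  then show ?thesis
    by (rule has_sum_Sigma') (simp add: has_sum_finite)
qed

definition line_coeff :: "(nat \<Rightarrow> nat \<Rightarrow> real) \<Rightarrow> real \<Rightarrow> real \<Rightarrow> nat \<Rightarrow> real" where
  "line_coeff c a b m = (\<Sum>i\<le>m. c i (m-i) * a^i * b^(m-i))"

definition quad_part :: "(nat \<Rightarrow> nat \<Rightarrow> real) \<Rightarrow> real \<Rightarrow> real \<Rightarrow> real" where
  "quad_part c x y = c 2 0 * x^2 + c 1 1 * x * y + c 0 2 * y^2"

lemma line_coeff_0: "line_coeff c a b 0 = c 0 0"
  by (simp add: line_coeff_def)

lemma line_coeff_1: "line_coeff c a b 1 = c 1 0 * a + c 0 1 * b"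
  by (simp add: line_coeff_def)

lemma line_coeff_2: "line_coeff c a b 2 = quad_part c a b"
  by (simp add: line_coeff_def quad_part_def numeral_2_eq_2 atMost_Suc power2_eq_square)

lemma sums_dpowser_line:
  assumes AS: "dpowser_abs_summable c \<rho>"
    and a: "\<bar>a\<bar> \<le> 1" and b: "\<bar>b\<bar> \<le> 1" and t: "\<bar>t\<bar> \<le> \<rho>"
  shows "(\<lambda>m. line_coeff c a b m * t^m) sums dpowser c (t*a) (t*b)"
proof -
  have ta: "\<bar>t*a\<bar> \<le> \<rho>" and tb: "\<bar>t*b\<bar> \<le> \<rho>"
    using order_trans[OF mult_left_le[OF a abs_ge_zero] t] order_trans[OF mult_left_le[OF b abs_ge_zero] t]
    by (simp_all add: abs_mult)
  have "((\<lambda>m. \<Sum>i\<le>m. c i (m-i) * (t*a)^i * (t*b)^(m-i)) has_sum dpowser c (t*a) (t*b)) UNIV"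
    using has_sum_diagonals[OF has_sum_dpowser[OF AS ta tb]] by simp
  moreover have "(\<Sum>i\<le>m. c i (m-i) * (t*a)^i * (t*b)^(m-i)) = line_coeff c a b m * t^m" for m
    unfolding line_coeff_def sum_distrib_right
  proof (rule sum.cong[OF refl])
    fix i assume "i \<in> {..m}"
    then have "t^i * t^(m-i) = t^m" by (simp flip: power_add)
    then show "c i (m-i) * (t*a)^i * (t*b)^(m-i) = c i (m-i) * a^i * b^(m-i) * t^m"
      by (simp add: power_mult_distrib mult_ac)
  qed
  ultimately show ?thesis using has_sum_imp_sums by simp
qed

definition diag_abs_coeff :: "(nat \<Rightarrow> nat \<Rightarrow> real) \<Rightarrow> nat \<Rightarrow> real" where
  "diag_abs_coeff c m = (\<Sum>i\<le>m. \<bar>c i (m-i)\<bar>)"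

lemma abs_line_coeff_le:
  assumes a: "\<bar>a\<bar> \<le> 1" and b: "\<bar>b\<bar> \<le> 1"
  shows "\<bar>line_coeff c a b m\<bar> \<le> diag_abs_coeff c m"
proof -
  have "\<bar>line_coeff c a b m\<bar> \<le> (\<Sum>i\<le>m. \<bar>c i (m-i) * a^i * b^(m-i)\<bar>)"
    unfolding line_coeff_def by (rule sum_abs)
  also have "\<dots> \<le> (\<Sum>i\<le>m. \<bar>c i (m-i)\<bar>)"
  proof (rule sum_mono)
    fix i
    have "\<bar>a^i\<bar> * \<bar>b^(m-i)\<bar> \<le> 1"
      using a b by (intro mult_le_one) (simp_all add: power_abs power_le_one)
    then show "\<bar>c i (m-i) * a^i * b^(m-i)\<bar> \<le> \<bar>c i (m-i)\<bar>"
      by (simp add: abs_mult mult.assoc mult_left_le)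
  qed
  finally show ?thesis by (simp add: diag_abs_coeff_def)
qed

lemma summable_diag_abs_coeff:
  assumes "dpowser_abs_summable c \<rho>"
  shows "summable (\<lambda>m. diag_abs_coeff c m * \<rho>^m)"
proof -
  obtain S where "((\<lambda>(i,j). \<bar>c i j\<bar> * \<rho>^(i+j)) has_sum S) UNIV"
    using assms summable_on_def by blast
  from has_sum_diagonals[OF this] have "summable (\<lambda>m. \<Sum>i\<le>m. \<bar>c i (m-i)\<bar> * \<rho>^m)"
    using has_sum_imp_sums sums_summable by fastforce
  then show ?thesis by (simp add: diag_abs_coeff_def sum_distrib_right)
qed

lemma summable_abs_line_coeff:
  assumes AS: "dpowser_abs_summable c \<rho>" and a: "\<bar>a\<bar> \<le> 1" and b: "\<bar>b\<bar> \<le> 1" and r: "\<rho> \<ge> 0"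
  shows "summable (\<lambda>m. \<bar>line_coeff c a b m\<bar> * \<rho>^m)"
proof (rule summable_comparison_test[OF _ summable_diag_abs_coeff[OF AS]], intro exI allI impI)
  fix m
  show "norm (\<bar>line_coeff c a b m\<bar> * \<rho>^m) \<le> diag_abs_coeff c m * \<rho>^m"
    using abs_line_coeff_le[OF a b, of c m] r by (simp add: mult_right_mono)
qed

lemma dpowser_0_0:
  assumes "dpowser_abs_summable c \<rho>" and "\<rho> > 0"
  shows "dpowser c 0 0 = c 0 0"
  using sums_dpowser_line[OF assms(1), of 0 0 0] assms(2) sums_unique[OF powser_sums_zero]
  by (simp add: line_coeff_0)

lemma sum_line_coeff_lessThan_3:
  assumes "c 0 0 = 0" and "c 1 0 = 0" and "c 0 1 = 0"
  shows "(\<Sum>m<3. line_coeff c a b m * \<tau>^m) = quad_part c (\<tau> * a) (\<tau> * b)"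
proof -
  have "(\<Sum>m<3. line_coeff c a b m * \<tau>^m)
        = line_coeff c a b 0 + line_coeff c a b 1 * \<tau> + line_coeff c a b 2 * \<tau>^2"
    by (simp add: numeral_3_eq_3 lessThan_Suc numeral_2_eq_2 power2_eq_square)
  also have "\<dots> = quad_part c (\<tau> * a) (\<tau> * b)"
    unfolding line_coeff_0 line_coeff_1 line_coeff_2 assms quad_part_def
    by (simp add: power2_eq_square algebra_simps)
  finally show ?thesis .
qed

lemma dpowser_quadratic_remainder:
  assumes AS: "dpowser_abs_summable c \<rho>" and r: "\<rho> > 0"
    and c00: "c 0 0 = 0" and c10: "c 1 0 = 0" and c01: "c 0 1 = 0"
  obtains K where "\<And>x y. \<bar>x\<bar> \<le> \<rho> \<Longrightarrow> \<bar>y\<bar> \<le> \<rho> \<Longrightarrow>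
      \<bar>dpowser c x y - quad_part c x y\<bar> \<le> K * (\<bar>x\<bar> + \<bar>y\<bar>)^3"
proof -
  define G where "G m = diag_abs_coeff c (m+3) * \<rho>^m" for m
  have "summable (\<lambda>m. diag_abs_coeff c (m+3) * \<rho>^(m+3) / \<rho>^3)"
    using summable_divide[OF summable_ignore_initial_segment[OF summable_diag_abs_coeff[OF AS]]] .
  moreover have "diag_abs_coeff c (m+3) * \<rho>^(m+3) / \<rho>^3 = G m" for m
    using r by (simp add: G_def power_add)
  ultimately have sG: "summable G" by simp
  define K where "K = suminf G"
  have K0: "K \<ge> 0"
    unfolding K_def using sG r by (simp add: G_def suminf_nonneg diag_abs_coeff_def sum_nonneg)
  show ?thesis
  proof (rule that)
    fix x y :: real
    assume x: "\<bar>x\<bar> \<le> \<rho>" and y: "\<bar>y\<bar> \<le> \<rho>"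
    define \<tau> where "\<tau> = max \<bar>x\<bar> \<bar>y\<bar>"
    have t0: "0 \<le> \<tau>" and tr: "\<tau> \<le> \<rho>" and txy: "\<tau> \<le> \<bar>x\<bar> + \<bar>y\<bar>"
      using x y by (auto simp: \<tau>_def)
    show "\<bar>dpowser c x y - quad_part c x y\<bar> \<le> K * (\<bar>x\<bar> + \<bar>y\<bar>)^3"
    proof (cases "\<tau> = 0")
      case True
      then have "x = 0" "y = 0" by (auto simp: \<tau>_def)
      then show ?thesis using dpowser_0_0[OF AS r] c00 by (simp add: quad_part_def)
    next
      case False
      with t0 have tp: "\<tau> > 0" by linarith
      define a where "a = x / \<tau>"
      define b where "b = y / \<tau>"
      have a: "\<bar>a\<bar> \<le> 1" and b: "\<bar>b\<bar> \<le> 1"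
        using tp by (auto simp: a_def b_def \<tau>_def abs_divide divide_le_eq_1)
      have xa: "\<tau> * a = x" and yb: "\<tau> * b = y" using tp by (simp_all add: a_def b_def)
      have "(\<lambda>m. line_coeff c a b m * \<tau>^m) sums dpowser c x y"
        using sums_dpowser_line[OF AS a b, of \<tau>] tr t0 xa yb by simp
      from sums_split_initial_segment[OF this, of 3]
      have "(\<lambda>m. line_coeff c a b (m+3) * \<tau>^(m+3)) sums
              (dpowser c x y - (\<Sum>m<3. line_coeff c a b m * \<tau>^m))" by simp
      moreover have "(\<Sum>m<3. line_coeff c a b m * \<tau>^m) = quad_part c x y"
        using sum_line_coeff_lessThan_3[OF c00 c10 c01] xa yb by simp
      ultimately have V: "(\<lambda>m. line_coeff c a b (m+3) * \<tau>^(m+3)) sums (dpowser c x y - quad_part c x y)"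
        by simp
      have bnd: "\<bar>line_coeff c a b (m+3) * \<tau>^(m+3)\<bar> \<le> \<tau>^3 * G m" for m
      proof -
        have "\<bar>line_coeff c a b (m+3) * \<tau>^(m+3)\<bar> = \<bar>line_coeff c a b (m+3)\<bar> * \<tau>^m * \<tau>^3"
          using t0 by (simp add: abs_mult power_add)
        also have "\<dots> \<le> diag_abs_coeff c (m+3) * \<rho>^m * \<tau>^3"
          using abs_line_coeff_le[OF a b, of c "m+3"] power_mono[OF tr t0, of m] t0
          by (intro mult_right_mono mult_mono) auto
        finally show ?thesis by (simp add: G_def mult_ac)
      qed
      have sG3: "(\<lambda>m. \<tau>^3 * G m) sums (\<tau>^3 * K)"
        unfolding K_def by (rule sums_mult[OF summable_sums[OF sG]])
      have "\<bar>dpowser c x y - quad_part c x y\<bar> \<le> \<tau>^3 * K"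
        using norm_sums_le[OF V sG3] bnd by simp
      also have "\<dots> \<le> (\<bar>x\<bar> + \<bar>y\<bar>)^3 * K"
        by (rule mult_right_mono[OF power_mono[OF txy t0] K0])
      finally show ?thesis by (simp add: mult.commute)
    qed
  qed
qed

lemma dpowser_swap: "dpowser c x y = dpowser (\<lambda>i j. c j i) y x"
proof -
  have "bij_betw (\<lambda>(i::nat, j::nat). (j, i)) UNIV UNIV"
    by (rule bij_betwI[where g="\<lambda>(i,j). (j,i)"]) auto
  from infsum_reindex_bij_betw[OF this, of "\<lambda>(i,j). c i j * x^i * y^j"]
  show ?thesis
    unfolding dpowser_def by (simp add: case_prod_unfold mult_ac)
qed

lemma dpowser_abs_summable_swap:
  assumes "dpowser_abs_summable c \<rho>"
  shows "dpowser_abs_summable (\<lambda>i j. c j i) \<rho>"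
proof -
  have "(\<lambda>(i,j). \<bar>c i j\<bar> * \<rho>^(i+j)) summable_on (UNIV \<times> UNIV)" using assms by simp
  then have "(\<lambda>(x,y). (\<lambda>(i,j). \<bar>c i j\<bar> * \<rho>^(i+j)) (y,x)) summable_on (UNIV \<times> UNIV)"
    using summable_on_swap by blast
  then show ?thesis by (simp add: add.commute)
qed

lemma two_pow_bound: "(i+1)*(i+2) \<le> 3 * (2::nat)^i"
proof (induction i)
  case (Suc i)
  show ?case
  proof (cases i)
    case (Suc k)
    have "(Suc i + 1) * (Suc i + 2) \<le> 2 * ((i+1)*(i+2))" using Suc by simp
    also have "\<dots> \<le> 2 * (3 * 2^i)" using Suc.IH by simp
    finally show ?thesis by simp
  qed simp
qed simp

definition deriv2_coeff :: "(nat \<Rightarrow> nat \<Rightarrow> real) \<Rightarrow> nat \<Rightarrow> nat \<Rightarrow> real" where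
  "deriv2_coeff c i j = real ((i+1)*(i+2)) * c (i+2) j"

text \<open>Differentiation only costs a factor of polynomial growth, which halving the radius absorbs.\<close>
lemma dpowser_abs_summable_deriv2_coeff:
  assumes AS: "dpowser_abs_summable c \<rho>" and r: "\<rho> > 0"
  shows "dpowser_abs_summable (deriv2_coeff c) (\<rho>/2)"
proof -
  have "(\<lambda>(i,j). \<bar>c i j\<bar> * \<rho>^(i+j)) summable_on ((\<lambda>(i::nat,j::nat). (i+2, j)) ` UNIV)"
    using AS by (rule summable_on_subset) simp
  then have "((\<lambda>(i,j). \<bar>c i j\<bar> * \<rho>^(i+j)) \<circ> (\<lambda>(i::nat,j::nat). (i+2, j))) summable_on UNIV"
    by (subst (asm) summable_on_reindex) (auto simp: inj_on_def)
  then have "(\<lambda>(i,j). \<bar>c (i+2) j\<bar> * \<rho>^(i+2+j)) summable_on UNIV"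
    by (simp add: o_def case_prod_unfold)
  then have S: "(\<lambda>ij. 3 / \<rho>^2 * (\<lambda>(i,j). \<bar>c (i+2) j\<bar> * \<rho>^(i+2+j)) ij) summable_on UNIV"
    by (rule summable_on_cmult_right)
  show ?thesis
  proof (rule summable_on_comparison_test[OF S])
    fix ij :: "nat \<times> nat"
    obtain i j where ij: "ij = (i,j)" by fastforce
    have "real ((i+1)*(i+2)) \<le> real (3 * 2^i)"
      using two_pow_bound[of i] by (simp only: of_nat_le_iff)
    also have "\<dots> = 3 * 2^i" by simp
    also have "\<dots> \<le> 3 * 2^(i+j)" by simp
    finally have q: "real ((i+1)*(i+2)) * \<rho>^(i+j) \<le> 3 * 2^(i+j) * \<rho>^(i+j)"
      using r by (intro mult_right_mono) auto
    have "\<bar>deriv2_coeff c i j\<bar> * (\<rho>/2)^(i+j)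
          = \<bar>c (i+2) j\<bar> * (real ((i+1)*(i+2)) * \<rho>^(i+j) / 2^(i+j))"
      by (simp add: deriv2_coeff_def abs_mult power_divide)
    also have "\<dots> \<le> \<bar>c (i+2) j\<bar> * (3 * \<rho>^(i+j))"
    proof (rule mult_left_mono)
      show "real ((i+1)*(i+2)) * \<rho>^(i+j) / 2^(i+j) \<le> 3 * \<rho>^(i+j)"
        using q by (simp add: divide_le_eq mult_ac)
    qed simp
    also have "\<dots> = 3 / \<rho>^2 * (\<bar>c (i+2) j\<bar> * \<rho>^(i+2+j))"
      using r by (simp add: power_add field_simps power2_eq_square)
    finally show "(\<lambda>(i,j). \<bar>deriv2_coeff c i j\<bar> * (\<rho>/2)^(i+j)) ij
                  \<le> 3 / \<rho>^2 * (\<lambda>(i,j). \<bar>c (i+2) j\<bar> * \<rho>^(i+2+j)) ij"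
      by (simp add: ij)
    show "0 \<le> (\<lambda>(i,j). \<bar>deriv2_coeff c i j\<bar> * (\<rho>/2)^(i+j)) ij" using r by (simp add: ij)
  qed
qed

lemma deriv2_powser_shifted:
  fixes A :: "nat \<Rightarrow> real" and \<phi> :: "real \<Rightarrow> real"
  assumes sA: "\<And>u. \<bar>u\<bar> \<le> \<rho> \<Longrightarrow> summable (\<lambda>n. A n * u^n)" and r: "\<rho> > 0"
    and \<phi>: "\<And>s. \<bar>s - s0\<bar> < \<rho> \<Longrightarrow> \<phi> s = (\<Sum>n. A n * (s - s0)^n)"
    and x: "\<bar>x\<bar> \<le> \<rho>/2"
  shows "deriv (\<lambda>s. deriv \<phi> s) (s0 + x) = (\<Sum>n. diffs (diffs A) n * x^n)"
proof -
  define D1 where "D1 u = (\<Sum>n. diffs A n * u^n)" for u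
  have d\<phi>: "deriv \<phi> s = D1 (s - s0)" if s: "\<bar>s - s0\<bar> < \<rho>" for s
  proof -
    have "DERIV (\<lambda>u. \<Sum>n. A n * u^n) (s - s0) :> D1 (s - s0)"
      unfolding D1_def by (rule termdiffs_strong[OF sA[of \<rho>]]) (use s r in simp_all)
    then have "DERIV (\<lambda>s. (\<Sum>n. A n * (s - s0)^n)) s :> D1 (s - s0) * 1"
      by (rule DERIV_chain2) (auto intro!: derivative_eq_intros)
    then have "DERIV (\<lambda>s. (\<Sum>n. A n * (s - s0)^n)) s :> D1 (s - s0)" by simp
    then have "DERIV \<phi> s :> D1 (s - s0)"
    proof (rule has_field_derivative_transform_within_open[where S="ball s0 \<rho>", OF _ open_ball])
      fix z assume "z \<in> ball s0 \<rho>"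
      then show "(\<Sum>n. A n * (z - s0)^n) = \<phi> z"
        using \<phi>[of z] by (simp add: dist_real_def abs_minus_commute)
    qed (use s in \<open>auto simp: dist_real_def abs_minus_commute\<close>)
    then show ?thesis by (rule DERIV_imp_deriv)
  qed
  have "summable (\<lambda>n. diffs A n * (3*\<rho>/4)^n)"
    by (rule termdiff_converges[where K=\<rho>]) (use r sA in auto)
  then have "DERIV D1 x :> (\<Sum>n. diffs (diffs A) n * x^n)"
    unfolding D1_def by (rule termdiffs_strong) (use x r in simp)
  then have "DERIV (\<lambda>s. D1 (s - s0)) (s0 + x) :> (\<Sum>n. diffs (diffs A) n * x^n) * 1"
    by (intro DERIV_chain2[where g="\<lambda>s. s - s0", of D1, simplified])
       (auto intro!: derivative_eq_intros)
  then have "DERIV (\<lambda>s. D1 (s - s0)) (s0 + x) :> (\<Sum>n. diffs (diffs A) n * x^n)" by simp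
  then have "DERIV (\<lambda>s. deriv \<phi> s) (s0 + x) :> (\<Sum>n. diffs (diffs A) n * x^n)"
    by (rule has_field_derivative_transform_within_open[where S="ball s0 \<rho>"])
       (use x r d\<phi> in \<open>auto simp: dist_real_def abs_minus_commute\<close>)
  then show ?thesis by (rule DERIV_imp_deriv)
qed

text \<open>Summing the double series row by row reduces the second partial derivative to the
  one-variable case.\<close>
lemma deriv2_dpowser:
  fixes \<phi> :: "real \<Rightarrow> real"
  assumes AS: "dpowser_abs_summable c \<rho>" and r: "\<rho> > 0"
    and x: "\<bar>x\<bar> \<le> \<rho>/2" and y: "\<bar>y\<bar> \<le> \<rho>/2"
    and \<phi>: "\<And>s. \<bar>s - s0\<bar> < \<rho> \<Longrightarrow> \<phi> s = dpowser c (s - s0) y"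
  shows "deriv (\<lambda>s. deriv \<phi> s) (s0 + x) = dpowser (deriv2_coeff c) x y"
proof -
  define A where "A i = (\<Sum>\<^sub>\<infinity>j. c i j * y^j)" for i
  have sA: "(\<lambda>i. A i * u^i) sums dpowser c u y" if "\<bar>u\<bar> \<le> \<rho>" for u
    using has_sum_imp_sums[OF has_sum_dpowser_rows[OF AS r that]] y r by (simp add: A_def)
  have "deriv (\<lambda>s. deriv \<phi> s) (s0 + x) = (\<Sum>n. diffs (diffs A) n * x^n)"
  proof (rule deriv2_powser_shifted[OF _ r _ x])
    show "summable (\<lambda>n. A n * u^n)" if "\<bar>u\<bar> \<le> \<rho>" for u using sA[OF that] by (rule sums_summable)
    show "\<phi> s = (\<Sum>n. A n * (s - s0)^n)" if "\<bar>s - s0\<bar> < \<rho>" for s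
      using \<phi>[OF that] sA[of "s - s0"] that by (simp add: sums_iff)
  qed
  moreover have "((\<lambda>i. (\<Sum>\<^sub>\<infinity>j. deriv2_coeff c i j * y^j) * x^i) has_sum dpowser (deriv2_coeff c) x y) UNIV"
    by (rule has_sum_dpowser_rows[OF dpowser_abs_summable_deriv2_coeff[OF AS r]]) (use r x y in auto)
  moreover have "(\<Sum>\<^sub>\<infinity>j. deriv2_coeff c i j * y^j) = diffs (diffs A) i" for i
  proof -
    have "(\<Sum>\<^sub>\<infinity>j. deriv2_coeff c i j * y^j) = (\<Sum>\<^sub>\<infinity>j. real ((i+1)*(i+2)) * (c (i+2) j * y^j))"
      by (simp add: deriv2_coeff_def mult.assoc)
    also have "\<dots> = real ((i+1)*(i+2)) * A (i+2)"
      unfolding A_def by (rule infsum_cmult_right')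
    finally show ?thesis by (simp add: diffs_def algebra_simps)
  qed
  ultimately have "(\<lambda>i. diffs (diffs A) i * x^i) sums dpowser (deriv2_coeff c) x y"
    using has_sum_imp_sums by simp
  with \<open>deriv (\<lambda>s. deriv \<phi> s) (s0 + x) = _\<close> show ?thesis by (simp add: sums_iff)
qed

definition laplacian_coeff :: "(nat \<Rightarrow> nat \<Rightarrow> real) \<Rightarrow> nat \<Rightarrow> nat \<Rightarrow> real" where
  "laplacian_coeff c i j = deriv2_coeff c i j + deriv2_coeff (\<lambda>i j. c j i) j i"

lemma laplacian_coeff_0_0: "laplacian_coeff c 0 0 = 2 * (c 2 0 + c 0 2)"
  by (simp add: laplacian_coeff_def deriv2_coeff_def numeral_2_eq_2)

lemma dpowser_abs_summable_laplacian_coeff: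
  assumes AS: "dpowser_abs_summable c \<rho>" and r: "\<rho> > 0"
  shows "dpowser_abs_summable (laplacian_coeff c) (\<rho>/2)"
proof -
  have "(\<lambda>ij. (\<lambda>(i,j). \<bar>deriv2_coeff c i j\<bar> * (\<rho>/2)^(i+j)) ij
            + (\<lambda>(i,j). \<bar>deriv2_coeff (\<lambda>i j. c j i) j i\<bar> * (\<rho>/2)^(i+j)) ij) summable_on UNIV"
    using summable_on_add[OF dpowser_abs_summable_deriv2_coeff[OF AS r]
        dpowser_abs_summable_swap[OF dpowser_abs_summable_deriv2_coeff[OF dpowser_abs_summable_swap[OF AS] r]]] .
  then show ?thesis
  proof (rule summable_on_comparison_test)
    fix ij :: "nat \<times> nat"
    obtain i j where ij: "ij = (i,j)" by fastforce
    have "\<bar>laplacian_coeff c i j\<bar> * (\<rho>/2)^(i+j)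
          \<le> (\<bar>deriv2_coeff c i j\<bar> + \<bar>deriv2_coeff (\<lambda>i j. c j i) j i\<bar>) * (\<rho>/2)^(i+j)"
      unfolding laplacian_coeff_def by (rule mult_right_mono) (use r in auto)
    then show "(\<lambda>(i,j). \<bar>laplacian_coeff c i j\<bar> * (\<rho>/2)^(i+j)) ij
               \<le> (\<lambda>(i,j). \<bar>deriv2_coeff c i j\<bar> * (\<rho>/2)^(i+j)) ij
                 + (\<lambda>(i,j). \<bar>deriv2_coeff (\<lambda>i j. c j i) j i\<bar> * (\<rho>/2)^(i+j)) ij"
      by (simp add: ij distrib_right)
    show "0 \<le> (\<lambda>(i,j). \<bar>laplacian_coeff c i j\<bar> * (\<rho>/2)^(i+j)) ij" using r by (simp add: ij)
  qed
qed

lemma laplacian_dpowser: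
  fixes \<psi> :: "real \<times> real \<Rightarrow> real"
  assumes AS: "dpowser_abs_summable c \<rho>" and r: "\<rho> > 0"
    and \<psi>: "\<And>x y. \<bar>x\<bar> < \<rho> \<Longrightarrow> \<bar>y\<bar> < \<rho> \<Longrightarrow> \<psi> (fst p + x, snd p + y) = dpowser c x y"
    and x: "\<bar>x\<bar> \<le> \<rho>/2" and y: "\<bar>y\<bar> \<le> \<rho>/2"
  shows "laplacian \<psi> (fst p + x, snd p + y) = dpowser (laplacian_coeff c) x y"
proof -
  have x': "\<bar>x\<bar> < \<rho>" and y': "\<bar>y\<bar> < \<rho>" using x y r by linarith+
  have xx: "deriv (\<lambda>s. deriv (\<lambda>s'. \<psi> (s', snd p + y)) s) (fst p + x) = dpowser (deriv2_coeff c) x y"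
  proof (rule deriv2_dpowser[OF AS r x y])
    fix s assume "\<bar>s - fst p\<bar> < \<rho>"
    then show "\<psi> (s, snd p + y) = dpowser c (s - fst p) y" using \<psi>[of "s - fst p" y] y' by simp
  qed
  have yy: "deriv (\<lambda>t. deriv (\<lambda>t'. \<psi> (fst p + x, t')) t) (snd p + y)
            = dpowser (deriv2_coeff (\<lambda>i j. c j i)) y x"
  proof (rule deriv2_dpowser[OF dpowser_abs_summable_swap[OF AS] r y x])
    fix t assume "\<bar>t - snd p\<bar> < \<rho>"
    then show "\<psi> (fst p + x, t) = dpowser (\<lambda>i j. c j i) (t - snd p) x"
      using \<psi>[of x "t - snd p"] x' dpowser_swap[of c x "t - snd p"] by simp
  qed
  have "((\<lambda>(i,j). laplacian_coeff c i j * x^i * y^j) has_sum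
          (dpowser (deriv2_coeff c) x y + dpowser (\<lambda>i j. deriv2_coeff (\<lambda>i j. c j i) j i) x y)) UNIV"
    using has_sum_add[OF has_sum_dpowser[OF dpowser_abs_summable_deriv2_coeff[OF AS r] x y]
        has_sum_dpowser[OF dpowser_abs_summable_swap[OF dpowser_abs_summable_deriv2_coeff[OF
            dpowser_abs_summable_swap[OF AS] r]] x y]]
    by (simp add: laplacian_coeff_def case_prod_unfold distrib_right)
  then have "dpowser (laplacian_coeff c) x y
             = dpowser (deriv2_coeff c) x y + dpowser (\<lambda>i j. deriv2_coeff (\<lambda>i j. c j i) j i) x y"
    unfolding dpowser_def by (rule infsumI)
  then show ?thesis
    using xx yy dpowser_swap[of "\<lambda>i j. deriv2_coeff (\<lambda>i j. c j i) j i" x y]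
    by (simp add: laplacian_def)
qed

lemma real_analytic_at2_dpowser:
  fixes \<psi> :: "real \<times> real \<Rightarrow> real"
  assumes "real_analytic_at2 \<psi> p"
  obtains c \<rho> where "\<rho> > 0" "dpowser_abs_summable c \<rho>"
    "\<And>x y. \<bar>x\<bar> < \<rho> \<Longrightarrow> \<bar>y\<bar> < \<rho> \<Longrightarrow> \<psi> (fst p + x, snd p + y) = dpowser c x y"
proof -
  obtain c :: "nat \<Rightarrow> nat \<Rightarrow> real" and r0 where r0: "r0 > 0" and
    H: "\<And>x y. dist (x, y) p < r0 \<Longrightarrow>
        ((\<lambda>(i, j). c i j * (x - fst p) ^ i * (y - snd p) ^ j) has_sum \<psi> (x, y)) UNIV"
    using assms unfolding real_analytic_at2_def by blast
  define \<rho> where "\<rho> = r0 / 4"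
  have r: "\<rho> > 0" using r0 by (simp add: \<rho>_def)
  have Hs: "((\<lambda>(i, j). c i j * x ^ i * y ^ j) has_sum \<psi> (fst p + x, snd p + y)) UNIV"
    if "\<bar>x\<bar> \<le> \<rho>" "\<bar>y\<bar> \<le> \<rho>" for x y
  proof -
    have "dist (fst p + x, snd p + y) p = sqrt (x^2 + y^2)"
      by (cases p) (simp add: dist_Pair_Pair dist_real_def)
    also have "\<dots> \<le> \<bar>x\<bar> + \<bar>y\<bar>" by (rule sqrt_sum_squares_le_sum_abs)
    also have "\<dots> < r0" using that r0 by (simp add: \<rho>_def)
    finally show ?thesis using H by fastforce
  qed
  have "(\<lambda>(i, j). c i j * \<rho> ^ i * \<rho> ^ j) summable_on UNIV"
    using Hs[of \<rho> \<rho>] r summable_on_def by fastforce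
  then have "(\<lambda>ij. \<bar>(\<lambda>(i, j). c i j * \<rho> ^ i * \<rho> ^ j) ij\<bar>) summable_on UNIV"
    by (simp add: summable_on_iff_abs_summable_on_real[of "\<lambda>(i, j). c i j * \<rho> ^ i * \<rho> ^ j"])
  moreover have "(\<lambda>ij. \<bar>(\<lambda>(i, j). c i j * \<rho> ^ i * \<rho> ^ j) ij\<bar>) = (\<lambda>(i,j). \<bar>c i j\<bar> * \<rho>^(i+j))"
    using r by (auto simp: abs_mult power_add)
  ultimately have AS: "dpowser_abs_summable c \<rho>" by simp
  show ?thesis
  proof (rule that[OF r AS])
    fix x y :: real assume "\<bar>x\<bar> < \<rho>" "\<bar>y\<bar> < \<rho>"
    then show "\<psi> (fst p + x, snd p + y) = dpowser c x y"
      unfolding dpowser_def by (intro infsumI[symmetric] Hs) auto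
  qed
qed

lemma line_coeff_1_eq_0_if_critical:
  fixes \<psi> :: "real \<times> real \<Rightarrow> real"
  assumes AS: "dpowser_abs_summable c \<rho>" and r: "\<rho> > 0"
    and \<psi>: "\<And>x y. \<bar>x\<bar> < \<rho> \<Longrightarrow> \<bar>y\<bar> < \<rho> \<Longrightarrow> \<psi> (fst p + x, snd p + y) = dpowser c x y"
    and a: "\<bar>a\<bar> \<le> 1" and b: "\<bar>b\<bar> \<le> 1"
    and grad: "(\<psi> has_derivative (\<lambda>_. 0)) (at p)"
  shows "line_coeff c a b 1 = 0"
proof -
  define L where "L t = (fst p + t * a, snd p + t * b)" for t :: real
  have "(L has_derivative (\<lambda>t. (t * a, t * b))) (at 0)"
    unfolding L_def by (auto intro!: derivative_eq_intros)
  from diff_chain_at[OF this, of \<psi> "\<lambda>_. 0"]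
  moreover have "(\<lambda>_::real. 0::real) = (*) 0" by auto
  ultimately have "((\<psi> \<circ> L) has_derivative (*) 0) (at 0)"
    using grad by (simp add: L_def o_def)
  then have D0: "DERIV (\<psi> \<circ> L) 0 :> 0"
    by (simp add: has_field_derivative_def)
  have "summable (\<lambda>m. line_coeff c a b m * \<rho>^m)"
    using summable_abs_line_coeff[OF AS a b] r
    by (intro summable_rabs_cancel[of "\<lambda>m. line_coeff c a b m * \<rho>^m"]) (simp add: abs_mult)
  from termdiffs_strong[OF this, of 0]
  have "DERIV (\<lambda>t. \<Sum>m. line_coeff c a b m * t^m) 0 :> line_coeff c a b 1"
    using r sums_unique[OF powser_sums_zero[of "diffs (line_coeff c a b)"]] by (simp add: diffs_def)
  then have "DERIV (\<psi> \<circ> L) 0 :> line_coeff c a b 1"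
  proof (rule has_field_derivative_transform_within_open[where S="ball 0 \<rho>"])
    fix t :: real assume "t \<in> ball 0 \<rho>"
    then have t: "\<bar>t\<bar> < \<rho>" by simp
    have "\<bar>t * a\<bar> < \<rho>" and "\<bar>t * b\<bar> < \<rho>"
      using le_less_trans[OF mult_left_le[OF a abs_ge_zero] t]
        le_less_trans[OF mult_left_le[OF b abs_ge_zero] t] by (simp_all add: abs_mult)
    then show "(\<Sum>m. line_coeff c a b m * t^m) = (\<psi> \<circ> L) t"
      using sums_dpowser_line[OF AS a b, of t] t \<psi> by (simp add: L_def sums_iff)
  qed (use r in auto)
  then show ?thesis using D0 DERIV_unique by blast
qed

section \<open>Real power series and their complex extension\<close>

lemma summable_powser_of_abs_bound:
  fixes c :: "nat \<Rightarrow> real"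
  assumes s: "summable (\<lambda>m. \<bar>c m\<bar> * \<rho>^m)" and t: "\<bar>t\<bar> \<le> \<rho>"
  shows "summable (\<lambda>m. c m * t^m)"
proof (rule summable_comparison_test[OF _ s], intro exI allI impI)
  fix m :: nat
  have "\<bar>c m\<bar> * \<bar>t\<bar>^m \<le> \<bar>c m\<bar> * \<rho>^m"
    using t by (intro mult_left_mono power_mono) auto
  then show "norm (c m * t^m) \<le> \<bar>c m\<bar> * \<rho>^m" by (simp add: abs_mult power_abs)
qed

lemma isCont_powser_of_abs_bound:
  fixes c :: "nat \<Rightarrow> real"
  assumes "summable (\<lambda>m. \<bar>c m\<bar> * \<rho>^m)" and "\<bar>t\<bar> < \<rho>"
  shows "isCont (\<lambda>t. \<Sum>m. c m * t^m) t"
proof (rule isCont_powser[OF summable_powser_of_abs_bound[OF assms(1)]])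
  show "\<bar>\<rho>\<bar> \<le> \<rho>" and "norm t < norm \<rho>" using assms(2) by auto
qed

definition cpowser :: "(nat \<Rightarrow> real) \<Rightarrow> complex \<Rightarrow> complex" where
  "cpowser c z = (\<Sum>m. of_real (c m) * z^m)"

lemma cpowser_of_real:
  fixes c :: "nat \<Rightarrow> real"
  assumes "summable (\<lambda>m. \<bar>c m\<bar> * \<rho>^m)" and "\<bar>t\<bar> \<le> \<rho>"
  shows "cpowser c (of_real t) = of_real (\<Sum>m. c m * t^m)"
proof -
  have "(\<lambda>m. of_real (c m * t^m)) sums (of_real (\<Sum>m. c m * t^m) :: complex)"
    by (intro sums_of_real summable_sums summable_powser_of_abs_bound[OF assms])
  then show ?thesis unfolding cpowser_def by (simp add: sums_iff)
qed

lemma cpowser_0: "cpowser c 0 = of_real (c 0)"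
  unfolding cpowser_def using sums_unique[OF powser_sums_zero[of "\<lambda>m. of_real (c m)"]] by simp

lemma cpowser_holomorphic:
  fixes c :: "nat \<Rightarrow> real"
  assumes s: "summable (\<lambda>m. \<bar>c m\<bar> * \<rho>^m)" and r: "\<rho> \<ge> 0"
  shows "cpowser c holomorphic_on ball 0 \<rho>"
proof -
  have "summable (\<lambda>m. of_real (c m * \<rho>^m) :: complex)"
    using summable_powser_of_abs_bound[OF s, of \<rho>] r by (simp only: summable_of_real)
  then have K: "summable (\<lambda>m. of_real (c m) * (of_real \<rho> :: complex)^m)" by simp
  show ?thesis
  proof (subst holomorphic_on_open[OF open_ball], intro ballI)
    fix z :: complex assume "z \<in> ball 0 \<rho>"
    then have "norm z < norm (of_real \<rho> :: complex)" using r by simp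
    then show "\<exists>f'. DERIV (cpowser c) z :> f'"
      unfolding cpowser_def using termdiffs_strong[OF K] by blast
  qed
qed

lemma sums_Re_holomorphic_power_series:
  assumes "f holomorphic_on ball 0 r" and "\<bar>x\<bar> < r"
  shows "(\<lambda>n. Re ((deriv ^^ n) f 0 / fact n) * x^n) sums Re (f (of_real x))"
proof -
  have "(\<lambda>n. (deriv ^^ n) f 0 / fact n * (of_real x)^n) sums f (of_real x)"
    using holomorphic_power_series[OF assms(1)] assms(2) by simp
  then have "(\<lambda>n. Re ((deriv ^^ n) f 0 / fact n * (of_real x)^n)) sums Re (f (of_real x))"
    by (simp only: sums_complex_iff)
  moreover have "Re (c * (of_real x)^n) = Re c * x^n" for c n
    by (simp flip: of_real_power)
  ultimately show ?thesis by (simp only:)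
qed

section \<open>An analytic change of variables\<close>

lemma holomorphic_local_inverse:
  assumes f: "f holomorphic_on S" and S: "open S" "a \<in> S" and df: "deriv f a \<noteq> 0"
  obtains r \<epsilon> g where "r > 0" "ball a r \<subseteq> S" "\<epsilon> > 0" "g holomorphic_on ball (f a) \<epsilon>"
    "g ` ball (f a) \<epsilon> \<subseteq> ball a r" "\<And>z. z \<in> ball a r \<Longrightarrow> g (f z) = z"
proof -
  obtain r where r: "r > 0" "ball a r \<subseteq> S" "open (f ` ball a r)" "inj_on f (ball a r)"
    by (rule has_complex_derivative_locally_invertible[OF f S(2,1) df])
  obtain g where g: "g holomorphic_on f ` ball a r" "\<And>z. z \<in> ball a r \<Longrightarrow> g (f z) = z"
    using holomorphic_has_inverse[OF holomorphic_on_subset[OF f r(2)] open_ball r(4)] by metis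
  have "f a \<in> f ` ball a r" using r(1) by simp
  then obtain \<epsilon> where \<epsilon>: "\<epsilon> > 0" "ball (f a) \<epsilon> \<subseteq> f ` ball a r"
    by (rule openE[OF r(3)])
  show ?thesis
  proof (rule that[OF r(1,2) \<epsilon>(1) holomorphic_on_subset[OF g(1) \<epsilon>(2)] _ g(2)])
    have "g ` f ` ball a r \<subseteq> ball a r" using g(2) by (simp add: image_subset_iff)
    then show "g ` ball (f a) \<epsilon> \<subseteq> ball a r" using \<epsilon>(2) by (meson image_mono order_trans)
  qed
qed

lemma local_inverse_mult_csqrt:
  assumes H: "H holomorphic_on ball 0 \<rho>" and r: "\<rho> > 0" and H0: "H 0 = of_real h0" "h0 > 0"
  obtains r \<epsilon> V where "r > 0" "ball (0::complex) r \<subseteq> ball 0 \<rho>" "\<And>z. z \<in> ball 0 r \<Longrightarrow> Re (H z) > 0"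
    "\<epsilon> > 0" "V holomorphic_on ball 0 \<epsilon>" "V ` ball 0 \<epsilon> \<subseteq> ball 0 r"
    "\<And>z. z \<in> ball 0 r \<Longrightarrow> V (z * csqrt (H z)) = z"
proof -
  have "continuous_on (ball 0 \<rho>) H" by (rule holomorphic_on_imp_continuous_on[OF H])
  then have "isCont H 0" using r by (simp add: continuous_on_eq_continuous_at[OF open_ball])
  then obtain d where d: "d > 0" "\<And>z. dist z 0 < d \<Longrightarrow> dist (H z) (H 0) < h0"
    using H0(2) unfolding continuous_at_eps_delta by blast
  define r1 where "r1 = min d \<rho>"
  have ReH: "Re (H z) > 0" if "z \<in> ball 0 r1" for z
  proof -
    have "cmod (H z - H 0) < h0" using d(2)[of z] that by (simp add: r1_def dist_norm)
    moreover have "\<bar>Re (H z - H 0)\<bar> \<le> cmod (H z - H 0)" by (rule abs_Re_le_cmod)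
    ultimately show ?thesis using H0(1) by simp
  qed
  define U where "U z = z * csqrt (H z)" for z
  have r1\<rho>: "ball (0::complex) r1 \<subseteq> ball 0 \<rho>" by (rule subset_ball) (simp add: r1_def)
  have H1: "H holomorphic_on ball 0 r1" using H r1\<rho> by (rule holomorphic_on_subset)
  have "H z \<notin> \<real>\<^sub>\<le>\<^sub>0" if "z \<in> ball 0 r1" for z
    using ReH[OF that] by (auto simp: complex_nonpos_Reals_iff)
  then have sq: "(\<lambda>z. csqrt (H z)) holomorphic_on ball 0 r1"
    by (rule holomorphic_on_csqrt'[OF H1])
  have U: "U holomorphic_on ball 0 r1"
    unfolding U_def by (intro holomorphic_on_mult holomorphic_on_ident sq)
  have r1: "0 \<in> ball (0::complex) r1" using d r by (simp add: r1_def)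
  have "DERIV (\<lambda>z. csqrt (H z)) 0 :> deriv (\<lambda>z. csqrt (H z)) 0"
    by (rule holomorphic_derivI[OF sq open_ball r1])
  then have "DERIV (\<lambda>z. z * csqrt (H z)) 0 :> 1 * csqrt (H 0) + deriv (\<lambda>z. csqrt (H z)) 0 * 0"
    by (rule DERIV_mult[OF DERIV_ident])
  then have "deriv U 0 = csqrt (H 0)" by (simp add: U_def[abs_def] DERIV_imp_deriv)
  then have dU: "deriv U 0 \<noteq> 0" using H0 by simp
  have U0: "U 0 = 0" by (simp add: U_def)
  show ?thesis
  proof (rule holomorphic_local_inverse[OF U open_ball r1 dU])
    fix r \<epsilon> V
    assume r: "r > 0" "ball (0::complex) r \<subseteq> ball 0 r1" and \<epsilon>: "\<epsilon> > 0"
      and V: "V holomorphic_on ball (U 0) \<epsilon>" "V ` ball (U 0) \<epsilon> \<subseteq> ball 0 r"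
        "\<And>z. z \<in> ball 0 r \<Longrightarrow> V (U z) = z"
    show thesis
    proof (rule that[OF r(1) _ _ \<epsilon> V(1,2)[unfolded U0]])
      show "ball (0::complex) r \<subseteq> ball 0 \<rho>" using r(2) r1\<rho> by (rule order_trans)
      show "Re (H z) > 0" if "z \<in> ball 0 r" for z using that r(2) ReH by (meson subsetD)
      show "V (z * csqrt (H z)) = z" if "z \<in> ball 0 r" for z using V(3)[OF that] by (simp add: U_def)
    qed
  qed
qed

text \<open>The substitution sigma = t * sqrt (h t) is an analytic change of variables near 0; it is
  inverted in the complex domain, where the inverse function theorem is available.\<close>
lemma holomorphic_inverse_of_t_sqrt_powser:
  fixes h :: "nat \<Rightarrow> real"
  assumes sh: "summable (\<lambda>m. \<bar>h m\<bar> * \<rho>^m)" and \<rho>: "\<rho> > 0" and h0: "h 0 > 0" and \<delta>: "\<delta> > 0"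
  obtains \<epsilon> V where "\<epsilon> > 0" "V holomorphic_on ball 0 \<epsilon>" "V ` ball 0 \<epsilon> \<subseteq> ball 0 \<rho>" "V 0 = 0"
    "\<And>\<sigma>. 0 < \<sigma> \<Longrightarrow> \<sigma> < \<epsilon> \<Longrightarrow>
       \<exists>t. 0 < t \<and> t < \<delta> \<and> t < \<rho> \<and> V (of_real \<sigma>) = of_real t \<and> \<sigma>^2 = t^2 * (\<Sum>m. h m * t^m)"
proof -
  define H where "H = cpowser h"
  have H: "H holomorphic_on ball 0 \<rho>" unfolding H_def by (rule cpowser_holomorphic[OF sh]) (use \<rho> in simp)
  have H0: "H 0 = of_real (h 0)" by (simp add: H_def cpowser_0)
  obtain r \<epsilon>0 V where r: "r > 0" "ball (0::complex) r \<subseteq> ball 0 \<rho>"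
    and ReH: "\<And>z. z \<in> ball 0 r \<Longrightarrow> Re (H z) > 0" and \<epsilon>0: "\<epsilon>0 > 0"
    and V: "V holomorphic_on ball 0 \<epsilon>0" "V ` ball 0 \<epsilon>0 \<subseteq> ball 0 r"
      "\<And>z. z \<in> ball 0 r \<Longrightarrow> V (z * csqrt (H z)) = z"
    using local_inverse_mult_csqrt[OF H \<rho> H0 h0] by metis
  have r\<rho>: "\<bar>t\<bar> < \<rho>" if "\<bar>t\<bar> < r" for t
    using r(2) that by (auto dest!: subsetD[where c="of_real t"])
  define hr where "hr t = (\<Sum>m. h m * t^m)" for t
  have H_of_real: "H (of_real t) = of_real (hr t)" if "\<bar>t\<bar> < r" for t
    unfolding H_def hr_def using r\<rho>[OF that] by (intro cpowser_of_real[OF sh]) auto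
  have hr_pos: "hr t > 0" if "\<bar>t\<bar> < r" for t
    using ReH[of "of_real t"] that H_of_real[OF that] by simp
  define u where "u t = t * sqrt (hr t)" for t
  define \<tau> where "\<tau> = min r \<delta> / 2"
  have \<tau>: "\<tau> > 0" "\<tau> < r" "\<tau> < \<delta>" using r(1) \<delta> by (auto simp: \<tau>_def)
  have "continuous_on {0..\<tau>} u"
  proof (rule continuous_at_imp_continuous_on, intro ballI)
    fix t assume "t \<in> {0..\<tau>}"
    then have "\<bar>t\<bar> < r" using \<tau> by auto
    then have "isCont hr t" unfolding hr_def by (rule isCont_powser_of_abs_bound[OF sh r\<rho>])
    then show "isCont u t" unfolding u_def by (intro continuous_intros)
  qed
  note IVT = IVT'[of u, OF _ _ _ this]
  have u\<tau>: "u \<tau> > 0" using \<tau> hr_pos[of \<tau>] by (simp add: u_def)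
  define \<epsilon> where "\<epsilon> = min \<epsilon>0 (u \<tau>)"
  have \<epsilon>: "\<epsilon> > 0" "\<epsilon> \<le> \<epsilon>0" using \<epsilon>0 u\<tau> by (auto simp: \<epsilon>_def)
  have V0: "V 0 = 0" using V(3)[of 0] r(1) by simp
  show ?thesis
  proof (rule that[OF \<epsilon>(1) holomorphic_on_subset[OF V(1)] _ V0])
    show "ball 0 \<epsilon> \<subseteq> ball 0 \<epsilon>0" using \<epsilon>(2) by (rule subset_ball)
    then show "V ` ball 0 \<epsilon> \<subseteq> ball 0 \<rho>" using V(2) r(2) by blast
    fix \<sigma> :: real assume \<sigma>: "0 < \<sigma>" "\<sigma> < \<epsilon>"
    obtain t where t: "0 \<le> t" "t \<le> \<tau>" "u t = \<sigma>"
      using IVT[of \<sigma>] \<sigma> \<tau> by (auto simp: u_def \<epsilon>_def)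
    have "t \<noteq> 0" using t \<sigma> by (auto simp: u_def)
    with t \<tau> have t': "0 < t" "\<bar>t\<bar> < r" by auto
    have "of_real t * csqrt (H (of_real t)) = of_real \<sigma>"
      using H_of_real[OF t'(2)] hr_pos[OF t'(2)] t by (simp add: u_def flip: of_real_mult)
    then have "V (of_real \<sigma>) = of_real t" using V(3)[of "of_real t"] t'(2) by simp
    moreover have "\<sigma>^2 = t^2 * hr t"
      using t hr_pos[OF t'(2)] by (auto simp: u_def power_mult_distrib)
    ultimately show "\<exists>t. 0 < t \<and> t < \<delta> \<and> t < \<rho> \<and> V (of_real \<sigma>) = of_real t \<and> \<sigma>^2 = t^2 * (\<Sum>m. h m * t^m)"
      using t'(1) t(2) \<tau> r\<rho>[OF t'(2)] by (intro exI[of _ t]) (auto simp: hr_def)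
  qed
qed

section \<open>Puiseux expansions of compositions\<close>

lemma powser_eq_square_mult_tail:
  fixes e :: "nat \<Rightarrow> real"
  assumes se: "summable (\<lambda>m. \<bar>e m\<bar> * \<rho>^m)" and \<rho>: "\<rho> > 0" and e0: "e 0 = 0" and e1: "e 1 = 0"
  shows "summable (\<lambda>m. \<bar>e (m+2)\<bar> * \<rho>^m)"
    and "\<bar>t\<bar> < \<rho> \<Longrightarrow> (\<Sum>m. e m * t^m) = t^2 * (\<Sum>m. e (m+2) * t^m)"
proof -
  have "summable (\<lambda>m. \<bar>e (m+2)\<bar> * \<rho>^(m+2) / \<rho>^2)"
    using summable_divide[OF summable_ignore_initial_segment[OF se, of 2]] .
  moreover have "\<bar>e (m+2)\<bar> * \<rho>^(m+2) / \<rho>^2 = \<bar>e (m+2)\<bar> * \<rho>^m" for m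
    using \<rho> by (simp add: power_add power2_eq_square)
  ultimately show sh: "summable (\<lambda>m. \<bar>e (m+2)\<bar> * \<rho>^m)" by (simp only:)
  assume "\<bar>t\<bar> < \<rho>"
  then have "(\<lambda>m. e (m+2) * t^m) sums (\<Sum>m. e (m+2) * t^m)"
    using summable_powser_of_abs_bound[OF sh] by (simp add: summable_sums)
  from sums_mult[OF this, of "t^2"]
  have "(\<lambda>m. e (m+2) * t^(m+2)) sums (t^2 * (\<Sum>m. e (m+2) * t^m))"
    by (simp add: power_add power2_eq_square mult_ac)
  then have "(\<lambda>m. e m * t^m) sums (t^2 * (\<Sum>m. e (m+2) * t^m))"
    using sums_iff_shift[of "\<lambda>m. e m * t^m" 2] e0 e1 by (simp add: numeral_2_eq_2)
  then show "(\<Sum>m. e m * t^m) = t^2 * (\<Sum>m. e (m+2) * t^m)" by (simp add: sums_iff)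
qed

lemma puiseux_of_comp_powser:
  fixes e f :: "nat \<Rightarrow> real" and F :: "real \<Rightarrow> real"
  assumes \<rho>: "\<rho> > 0" and se: "summable (\<lambda>m. \<bar>e m\<bar> * \<rho>^m)" and sf: "summable (\<lambda>m. \<bar>f m\<bar> * \<rho>^m)"
    and e0: "e 0 = 0" and e1: "e 1 = 0" and e2: "e 2 > 0" and \<delta>: "\<delta> > 0"
    and comp: "\<And>t. 0 < t \<Longrightarrow> t < \<delta> \<Longrightarrow> F (\<Sum>m. e m * t^m) = (\<Sum>m. f m * t^m)"
    and F0: "F 0 = f 0"
  obtains a \<epsilon> where "\<epsilon> > 0" "a 0 = f 0" "\<And>s. 0 \<le> s \<Longrightarrow> s < \<epsilon> \<Longrightarrow> (\<lambda>k. a k * sqrt s ^ k) sums F s"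
proof -
  define h where "h m = e (m+2)" for m
  note tail = powser_eq_square_mult_tail[OF se \<rho> e0 e1, folded h_def]
  have h0: "h 0 > 0" using e2 by (simp add: h_def numeral_2_eq_2)
  show ?thesis
  proof (rule holomorphic_inverse_of_t_sqrt_powser[OF tail(1) \<rho> h0 \<delta>])
    fix \<epsilon> V
    assume \<epsilon>: "\<epsilon> > 0" and V: "V holomorphic_on ball 0 \<epsilon>" "V ` ball 0 \<epsilon> \<subseteq> ball 0 \<rho>" "V 0 = 0"
      and inv: "\<And>\<sigma>. 0 < \<sigma> \<Longrightarrow> \<sigma> < \<epsilon> \<Longrightarrow>
         \<exists>t. 0 < t \<and> t < \<delta> \<and> t < \<rho> \<and> V (of_real \<sigma>) = of_real t \<and> \<sigma>^2 = t^2 * (\<Sum>m. h m * t^m)"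
    define \<Phi> where "\<Phi> = cpowser f \<circ> V"
    have \<Phi>: "\<Phi> holomorphic_on ball 0 \<epsilon>"
      unfolding \<Phi>_def using cpowser_holomorphic[OF sf] \<rho>
      by (intro holomorphic_on_compose_gen[OF V(1) _ V(2)]) auto
    define a where "a k = Re ((deriv ^^ k) \<Phi> 0 / fact k)" for k
    have a0: "a 0 = f 0" by (simp add: a_def \<Phi>_def V(3) cpowser_0)
    show thesis
    proof (rule that[where a=a and \<epsilon>="\<epsilon>^2", OF _ a0])
      show "\<epsilon>^2 > 0" using \<epsilon> by simp
      fix s assume s: "0 \<le> s" "s < \<epsilon>^2"
      define \<sigma> where "\<sigma> = sqrt s"
      have \<sigma>: "0 \<le> \<sigma>" "\<sigma> < \<epsilon>"
        using s \<epsilon> by (auto simp: \<sigma>_def real_sqrt_less_iff intro: real_less_lsqrt)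
      show "(\<lambda>k. a k * sqrt s ^ k) sums F s"
      proof (cases "\<sigma> = 0")
        case True
        then show ?thesis using powser_sums_zero[of a] a0 F0 by (simp add: \<sigma>_def)
      next
        case False
        then obtain t where t: "0 < t" "t < \<delta>" "t < \<rho>" "V (of_real \<sigma>) = of_real t"
          and \<sigma>t: "\<sigma>^2 = t^2 * (\<Sum>m. h m * t^m)"
          using inv[of \<sigma>] \<sigma> by auto
        have "F s = (\<Sum>m. f m * t^m)"
          using comp[OF t(1,2)] tail(2)[of t] \<sigma>t t s by (simp add: \<sigma>_def)
        also have "\<dots> = Re (\<Phi> (of_real \<sigma>))"
          using cpowser_of_real[OF sf, of t] t by (simp add: \<Phi>_def)
        finally show ?thesis
          using sums_Re_holomorphic_power_series[OF \<Phi>, of \<sigma>] \<sigma> by (simp add: a_def \<sigma>_def)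
      qed
    qed
  qed
qed

lemma odd_coeff_nonzero_if_not_analytic:
  fixes a :: "nat \<Rightarrow> real"
  assumes \<epsilon>: "\<epsilon> > 0" and S: "\<And>s. 0 \<le> s \<Longrightarrow> s < \<epsilon> \<Longrightarrow> (\<lambda>k. a k * sqrt s ^ k) sums F s"
    and not_an: "\<not> real_analytic_at_0_right F"
  shows "\<exists>k. odd k \<and> a k \<noteq> 0"
proof (rule ccontr)
  assume "\<nexists>k. odd k \<and> a k \<noteq> 0"
  then have odd0: "a k = 0" if "odd k" for k using that by blast
  have "(\<lambda>n. a (2 * n) * s ^ n) sums F s" if s: "0 \<le> s" "s < \<epsilon>" for s
  proof -
    have "(\<lambda>n. a (2 * n) * sqrt s ^ (2 * n)) sums F s"
    proof (rule sums_mono_reindex[THEN iffD2, OF _ _ S[OF s]])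
      show "strict_mono (\<lambda>n::nat. 2 * n)" by (rule strict_monoI) simp
      show "a k * sqrt s ^ k = 0" if "k \<notin> range (\<lambda>n::nat. 2 * n)" for k
      proof -
        have "k \<noteq> 2 * (k div 2)" using that by (metis rangeI)
        then have "odd k" by presburger
        then show ?thesis using odd0[of k] by simp
      qed
    qed
    then show ?thesis using s by (simp add: power_mult)
  qed
  then have "real_analytic_at_0_right F"
    unfolding real_analytic_at_0_right_def using \<epsilon> by (intro exI[of _ "\<lambda>n. a (2 * n)"] exI[of _ \<epsilon>]) simp
  with not_an show False ..
qed

lemma const_coeff_eq_of_comp_powser:
  fixes e f :: "nat \<Rightarrow> real" and F :: "real \<Rightarrow> real"
  assumes \<rho>: "\<rho> > 0" and se: "summable (\<lambda>m. \<bar>e m\<bar> * \<rho>^m)" and sf: "summable (\<lambda>m. \<bar>f m\<bar> * \<rho>^m)"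
    and e0: "e 0 = 0" and \<delta>: "\<delta> > 0" and F: "continuous_on {0..1} F"
    and comp: "\<And>t. 0 < t \<Longrightarrow> t < \<delta> \<Longrightarrow>
                 (\<Sum>m. e m * t^m) \<in> {0..1} \<and> F (\<Sum>m. e m * t^m) = (\<Sum>m. f m * t^m)"
  shows "f 0 = F 0"
proof -
  define g where "g t = (\<Sum>m. e m * t^m)" for t :: real
  define l where "l t = (\<Sum>m. f m * t^m)" for t :: real
  have "isCont g 0" unfolding g_def by (rule isCont_powser_of_abs_bound[OF se]) (use \<rho> in simp)
  moreover have "g 0 = 0" unfolding g_def using powser_sums_zero[of e] e0 by (simp add: sums_iff)
  ultimately have g: "(g \<longlongrightarrow> 0) (at_right 0)"
    by (metis isCont_def tendsto_within_subset subset_UNIV)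
  have "isCont l 0" unfolding l_def by (rule isCont_powser_of_abs_bound[OF sf]) (use \<rho> in simp)
  moreover have "l 0 = f 0" unfolding l_def using powser_sums_zero[of f] by (simp add: sums_iff)
  ultimately have l: "(l \<longlongrightarrow> f 0) (at_right 0)"
    by (metis isCont_def tendsto_within_subset subset_UNIV)
  have ev: "\<forall>\<^sub>F t in at_right 0. g t \<in> {0..1} \<and> F (g t) = l t"
    unfolding eventually_at_right_field using \<delta> comp by (auto simp: g_def l_def)
  have "((\<lambda>t. F (g t)) \<longlongrightarrow> F 0) (at_right 0)"
    by (rule continuous_on_tendsto_compose[OF F g]) (use ev in \<open>auto elim: eventually_mono\<close>)
  then have "(l \<longlongrightarrow> F 0) (at_right 0)"
    by (rule Lim_transform_eventually) (use ev in \<open>auto elim: eventually_mono\<close>)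
  then show ?thesis using l tendsto_unique[OF trivial_limit_at_right_real] by blast
qed

section \<open>The inner normal at a nearest boundary point\<close>

lemma inner_tangent_eq_0_at_nearest_point:
  fixes \<gamma> :: "real \<Rightarrow> 'a::real_inner"
  assumes \<gamma>: "(\<gamma> has_vector_derivative w) (at t0)" and near: "\<And>t. dist q (\<gamma> t0) \<le> dist q (\<gamma> t)"
  shows "inner (\<gamma> t0 - q) w = 0"
proof -
  define \<phi> where "\<phi> t = inner (\<gamma> t - q) (\<gamma> t - q)" for t
  have "(\<phi> has_derivative (\<lambda>h. inner (\<gamma> t0 - q) (h *\<^sub>R w) + inner (h *\<^sub>R w) (\<gamma> t0 - q))) (at t0)"
    using \<gamma> unfolding \<phi>_def has_vector_derivative_def by (auto intro!: derivative_eq_intros)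
  moreover have "(\<lambda>h. inner (\<gamma> t0 - q) (h *\<^sub>R w) + inner (h *\<^sub>R w) (\<gamma> t0 - q))
                 = (*) (2 * inner (\<gamma> t0 - q) w)"
    by (auto simp: fun_eq_iff inner_commute)
  ultimately have "DERIV \<phi> t0 :> 2 * inner (\<gamma> t0 - q) w"
    unfolding has_field_derivative_def by (simp only:)
  moreover have "\<phi> t0 \<le> \<phi> t" for t
    using near[of t] by (simp add: \<phi>_def dist_norm power2_norm_eq_inner[symmetric] norm_minus_commute
        power_mono)
  ultimately have "2 * inner (\<gamma> t0 - q) w = 0"
    by (intro DERIV_local_min[of \<phi> _ t0 1]) auto
  then show ?thesis by simp
qed

lemma quad_part_scale: "quad_part c (h * a) (h * b) = h^2 * quad_part c a b"
  by (simp add: quad_part_def power2_eq_square algebra_simps)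

lemma quad_part_eq_0_of_cubic_bound:
  fixes g1 g2 :: "real \<Rightarrow> real"
  assumes d1: "DERIV g1 t0 :> w1" and d2: "DERIV g2 t0 :> w2"
    and ev: "\<forall>\<^sub>F t in at t0. \<bar>quad_part c (g1 t - g1 t0) (g2 t - g2 t0)\<bar>
                             \<le> K * (\<bar>g1 t - g1 t0\<bar> + \<bar>g2 t - g2 t0\<bar>)^3"
  shows "quad_part c w1 w2 = 0"
proof -
  define q1 where "q1 t = (g1 t - g1 t0) / (t - t0)" for t
  define q2 where "q2 t = (g2 t - g2 t0) / (t - t0)" for t
  have l1: "(q1 \<longlongrightarrow> w1) (at t0)" and l2: "(q2 \<longlongrightarrow> w2) (at t0)"
    using d1 d2 unfolding has_field_derivative_iff q1_def q2_def by simp_all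
  have L: "((\<lambda>t. \<bar>quad_part c (q1 t) (q2 t)\<bar>) \<longlongrightarrow> \<bar>quad_part c w1 w2\<bar>) (at t0)"
    unfolding quad_part_def by (intro tendsto_intros l1 l2)
  have "((\<lambda>t. \<bar>t - t0\<bar>) \<longlongrightarrow> \<bar>t0 - t0\<bar>) (at t0)" by (intro tendsto_intros)
  then have R: "((\<lambda>t. K * (\<bar>q1 t\<bar> + \<bar>q2 t\<bar>)^3 * \<bar>t - t0\<bar>) \<longlongrightarrow> K * (\<bar>w1\<bar> + \<bar>w2\<bar>)^3 * 0) (at t0)"
    by (intro tendsto_intros l1 l2) simp
  have "\<forall>\<^sub>F t in at t0. \<bar>quad_part c (q1 t) (q2 t)\<bar> \<le> K * (\<bar>q1 t\<bar> + \<bar>q2 t\<bar>)^3 * \<bar>t - t0\<bar>"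
    using eventually_conj[OF ev eventually_neq_at_within[of t0 t0 UNIV]]
  proof (rule eventually_mono, elim conjE)
    fix t assume bound: "\<bar>quad_part c (g1 t - g1 t0) (g2 t - g2 t0)\<bar>
                           \<le> K * (\<bar>g1 t - g1 t0\<bar> + \<bar>g2 t - g2 t0\<bar>)^3" and "t \<noteq> t0"
    then have h: "\<bar>t - t0\<bar>^2 > 0" by simp
    have g: "g1 t - g1 t0 = (t - t0) * q1 t" "g2 t - g2 t0 = (t - t0) * q2 t"
      using h by (simp_all add: q1_def q2_def)
    have "\<bar>quad_part c (q1 t) (q2 t)\<bar> * \<bar>t - t0\<bar>^2 = \<bar>quad_part c (g1 t - g1 t0) (g2 t - g2 t0)\<bar>"
      unfolding g quad_part_scale by (simp add: abs_mult power_abs)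
    also have "\<dots> \<le> K * (\<bar>g1 t - g1 t0\<bar> + \<bar>g2 t - g2 t0\<bar>)^3" by (rule bound)
    also have "\<bar>g1 t - g1 t0\<bar> + \<bar>g2 t - g2 t0\<bar> = \<bar>t - t0\<bar> * (\<bar>q1 t\<bar> + \<bar>q2 t\<bar>)"
      unfolding g by (simp add: abs_mult distrib_left)
    also have "K * (\<bar>t - t0\<bar> * (\<bar>q1 t\<bar> + \<bar>q2 t\<bar>))^3
               = (K * (\<bar>q1 t\<bar> + \<bar>q2 t\<bar>)^3 * \<bar>t - t0\<bar>) * \<bar>t - t0\<bar>^2"
      by (simp add: power3_eq_cube power2_eq_square mult_ac)
    finally show "\<bar>quad_part c (q1 t) (q2 t)\<bar> \<le> K * (\<bar>q1 t\<bar> + \<bar>q2 t\<bar>)^3 * \<bar>t - t0\<bar>"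
      using h by (simp add: mult_le_cancel_right)
  qed
  from tendsto_le[OF _ R L this] show ?thesis by simp
qed

text \<open>The trace c 2 0 + c 0 2 of the quadratic form is the sum of its values on the orthonormal
  basis formed by the unit normal v and w / norm w.\<close>
lemma quad_part_unit_normal:
  fixes v1 v2 w1 w2 :: real
  assumes Qw: "quad_part c w1 w2 = 0" and w: "w1 \<noteq> 0 \<or> w2 \<noteq> 0"
    and orth: "v1 * w1 + v2 * w2 = 0" and unit: "v1^2 + v2^2 = 1"
  shows "quad_part c v1 v2 = c 2 0 + c 0 2"
proof -
  define l where "l = w2 * v1 - w1 * v2"
  have w1: "w1 = - l * v2"
  proof -
    have o: "v2 * w2 = - (v1 * w1)" using orth by linarith
    have "- l * v2 = w1 * v2^2 - v1 * (v2 * w2)" by (simp add: l_def power2_eq_square algebra_simps)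
    also have "\<dots> = w1 * (v1^2 + v2^2)" unfolding o by (simp add: power2_eq_square algebra_simps)
    finally show ?thesis using unit by simp
  qed
  have w2: "w2 = l * v1"
  proof -
    have o: "v1 * w1 = - (v2 * w2)" using orth by linarith
    have "l * v1 = w2 * v1^2 - v2 * (v1 * w1)" by (simp add: l_def power2_eq_square algebra_simps)
    also have "\<dots> = w2 * (v1^2 + v2^2)" unfolding o by (simp add: power2_eq_square algebra_simps)
    finally show ?thesis using unit by simp
  qed
  have "l \<noteq> 0" using w w1 w2 by auto
  moreover have "l^2 * quad_part c v2 (- v1) = 0"
    using Qw unfolding w1 w2 by (simp add: quad_part_def power2_eq_square algebra_simps)
  ultimately have "quad_part c v2 (- v1) = 0" by simp
  then have "quad_part c v1 v2 = quad_part c v1 v2 + quad_part c v2 (- v1)" by simp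
  also have "\<dots> = (c 2 0 + c 0 2) * (v1^2 + v2^2)" by (simp add: quad_part_def algebra_simps)
  finally show ?thesis using unit by simp
qed

lemma periodic_image:
  fixes \<gamma> :: "real \<Rightarrow> 'a"
  assumes per: "\<And>t. \<gamma> (t + 1) = \<gamma> t"
  shows "\<gamma> t \<in> \<gamma> ` {0..1}"
proof -
  have shift: "\<gamma> (x + real n) = \<gamma> x" for x n
  proof (induction n)
    case (Suc n)
    have "\<gamma> (x + real (Suc n)) = \<gamma> ((x + real n) + 1)" by (simp add: ac_simps)
    then show ?case using Suc per by simp
  qed simp
  define s where "s = t - of_int \<lfloor>t\<rfloor>"
  have "\<gamma> t = \<gamma> s"
  proof (cases "\<lfloor>t\<rfloor> \<ge> 0")
    case True
    then show ?thesis using shift[of s "nat \<lfloor>t\<rfloor>"] by (simp add: s_def)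
  next
    case False
    then show ?thesis using shift[of t "nat (- \<lfloor>t\<rfloor>)"] by (simp add: s_def)
  qed
  moreover have "s \<in> {0..1}" unfolding s_def by simp linarith
  ultimately show ?thesis by blast
qed

lemma segment_in_ball:
  fixes p q :: "'a::real_normed_vector"
  assumes "0 < t" "t < dist q p"
  shows "p + (t / dist q p) *\<^sub>R (q - p) \<in> ball q (dist q p)"
proof -
  have "q - (p + (t / dist q p) *\<^sub>R (q - p)) = (1 - t / dist q p) *\<^sub>R (q - p)"
    by (simp add: algebra_simps)
  moreover have "0 \<le> 1 - t / dist q p" using assms by (simp add: divide_le_eq_1)
  ultimately have "dist q (p + (t / dist q p) *\<^sub>R (q - p)) = (1 - t / dist q p) * dist q p"
    by (simp add: dist_norm)
  also have "\<dots> < dist q p"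
    using assms by (simp add: algebra_simps) (metis dist_self order.asym)
  finally show ?thesis by simp
qed

lemma nearest_frontier_point:
  fixes \<Omega> :: "'a::euclidean_space set"
  assumes "open \<Omega>" and q: "q \<in> \<Omega>" and "frontier \<Omega> \<noteq> {}"
  obtains p where "p \<in> frontier \<Omega>" "\<And>y. y \<in> frontier \<Omega> \<Longrightarrow> dist q p \<le> dist q y"
    "dist q p > 0" "ball q (dist q p) \<subseteq> \<Omega>"
proof -
  obtain p where p: "p \<in> frontier \<Omega>" and near: "\<And>y. y \<in> frontier \<Omega> \<Longrightarrow> dist q p \<le> dist q y"
    using distance_attains_inf[OF frontier_closed assms(3), of q] by blast
  have "q \<notin> frontier \<Omega>" using q \<open>open \<Omega>\<close> by (simp add: frontier_def interior_open)
  then have pos: "dist q p > 0" using p by auto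
  have "ball q (dist q p) \<subseteq> \<Omega>"
  proof (rule ccontr)
    assume "\<not> ball q (dist q p) \<subseteq> \<Omega>"
    moreover have "q \<in> ball q (dist q p) \<inter> \<Omega>" using q pos by simp
    then have "ball q (dist q p) \<inter> \<Omega> \<noteq> {}" by blast
    ultimately obtain y where "y \<in> ball q (dist q p)" "y \<in> frontier \<Omega>"
      using connected_Int_frontier[OF connected_ball] by blast
    then show False using near[of y] by simp
  qed
  with p near pos show ?thesis by (rule that)
qed

lemma boundary_point_with_interior_ball:
  fixes \<Omega> :: "(real \<times> real) set"
  assumes "open \<Omega>" and "analytic_boundary \<Omega>"
  obtains q p \<gamma> t0 w where "p \<in> frontier \<Omega>" "dist q p > 0"
    "\<And>t. 0 < t \<Longrightarrow> t < dist q p \<Longrightarrow> p + (t / dist q p) *\<^sub>R (q - p) \<in> \<Omega>"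
    "\<And>t. \<gamma> t \<in> frontier \<Omega>" "\<And>t. dist q p \<le> dist q (\<gamma> t)"
    "(\<gamma> has_vector_derivative w) (at t0)" "w \<noteq> 0" "\<gamma> t0 = p"
proof -
  obtain \<gamma> :: "real \<Rightarrow> real \<times> real" where per: "\<And>t. \<gamma> (t + 1) = \<gamma> t"
    and vd: "\<And>t. \<exists>w. w \<noteq> 0 \<and> (\<gamma> has_vector_derivative w) (at t)"
    and fr: "frontier \<Omega> = \<gamma> ` {0..1}"
    using assms(2) unfolding analytic_boundary_def by blast
  have \<gamma>_fr: "\<gamma> t \<in> frontier \<Omega>" for t using periodic_image[of \<gamma>, OF per] fr by simp
  then have "\<Omega> \<noteq> {}" by (metis empty_iff frontier_empty)
  then obtain q where q: "q \<in> \<Omega>" by blast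
  obtain p where p: "p \<in> frontier \<Omega>" and near: "\<And>y. y \<in> frontier \<Omega> \<Longrightarrow> dist q p \<le> dist q y"
    and R: "dist q p > 0" and ball: "ball q (dist q p) \<subseteq> \<Omega>"
    using nearest_frontier_point[OF assms(1) q] \<gamma>_fr by (metis empty_iff)
  obtain t0 where "\<gamma> t0 = p" using p fr by auto
  moreover obtain w where "(\<gamma> has_vector_derivative w) (at t0)" "w \<noteq> 0" using vd by blast
  moreover have "p + (t / dist q p) *\<^sub>R (q - p) \<in> \<Omega>" if "0 < t" "t < dist q p" for t
    using ball segment_in_ball[OF that] by (rule subsetD)
  ultimately show ?thesis using that[of p q \<gamma> w t0] p R \<gamma>_fr near by blast
qed

text \<open>Q approximates psi up to a cubic error, so it vanishes on tangents of the zero set of psi.\<close>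
lemma quad_part_tangent_eq_0:
  fixes \<psi> :: "real \<times> real \<Rightarrow> real" and \<gamma> :: "real \<Rightarrow> real \<times> real"
  assumes AS: "dpowser_abs_summable c \<rho>" and r: "\<rho> > 0"
    and \<psi>: "\<And>x y. \<bar>x\<bar> < \<rho> \<Longrightarrow> \<bar>y\<bar> < \<rho> \<Longrightarrow> \<psi> (fst p + x, snd p + y) = dpowser c x y"
    and c00: "c 0 0 = 0" and c10: "c 1 0 = 0" and c01: "c 0 1 = 0"
    and \<gamma>: "(\<gamma> has_vector_derivative w) (at t0)" "\<gamma> t0 = p" and zero: "\<And>t. \<psi> (\<gamma> t) = 0"
  shows "quad_part c (fst w) (snd w) = 0"
proof -
  obtain K where K: "\<And>x y. \<bar>x\<bar> \<le> \<rho> \<Longrightarrow> \<bar>y\<bar> \<le> \<rho> \<Longrightarrow>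
      \<bar>dpowser c x y - quad_part c x y\<bar> \<le> K * (\<bar>x\<bar> + \<bar>y\<bar>)^3"
    using dpowser_quadratic_remainder[OF AS r c00 c10 c01] by blast
  define g1 where "g1 = (\<lambda>t. fst (\<gamma> t))"
  define g2 where "g2 = (\<lambda>t. snd (\<gamma> t))"
  have d1: "DERIV g1 t0 :> fst w" and d2: "DERIV g2 t0 :> snd w"
    using has_derivative_fst[OF \<gamma>(1)[unfolded has_vector_derivative_def]]
      has_derivative_snd[OF \<gamma>(1)[unfolded has_vector_derivative_def]]
    by (simp_all add: g1_def g2_def has_field_derivative_def mult_commute_abs)
  have "\<forall>\<^sub>F t in at t0. dist (g1 t) (g1 t0) < \<rho> \<and> dist (g2 t) (g2 t0) < \<rho>"
    using DERIV_isCont[OF d1] DERIV_isCont[OF d2] r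
    by (intro eventually_conj) (auto simp: isCont_def intro: tendstoD)
  then have "\<forall>\<^sub>F t in at t0. \<bar>quad_part c (g1 t - g1 t0) (g2 t - g2 t0)\<bar>
                             \<le> K * (\<bar>g1 t - g1 t0\<bar> + \<bar>g2 t - g2 t0\<bar>)^3"
  proof (rule eventually_mono, elim conjE)
    fix t assume "dist (g1 t) (g1 t0) < \<rho>" "dist (g2 t) (g2 t0) < \<rho>"
    then have x: "\<bar>g1 t - g1 t0\<bar> < \<rho>" and y: "\<bar>g2 t - g2 t0\<bar> < \<rho>" by (simp_all add: dist_real_def)
    have "\<gamma> t = (fst p + (g1 t - g1 t0), snd p + (g2 t - g2 t0))"
      using \<gamma>(2) by (simp add: g1_def g2_def)
    then have "dpowser c (g1 t - g1 t0) (g2 t - g2 t0) = 0" using zero[of t] \<psi>[OF x y] by simp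
    then show "\<bar>quad_part c (g1 t - g1 t0) (g2 t - g2 t0)\<bar> \<le> K * (\<bar>g1 t - g1 t0\<bar> + \<bar>g2 t - g2 t0\<bar>)^3"
      using K[of "g1 t - g1 t0" "g2 t - g2 t0"] x y by simp
  qed
  from quad_part_eq_0_of_cubic_bound[OF d1 d2 this] show ?thesis .
qed

lemma quad_part_inner_normal:
  fixes \<psi> :: "real \<times> real \<Rightarrow> real" and \<gamma> :: "real \<Rightarrow> real \<times> real"
  assumes AS: "dpowser_abs_summable c \<rho>" and r: "\<rho> > 0"
    and \<psi>: "\<And>x y. \<bar>x\<bar> < \<rho> \<Longrightarrow> \<bar>y\<bar> < \<rho> \<Longrightarrow> \<psi> (fst p + x, snd p + y) = dpowser c x y"
    and c00: "c 0 0 = 0" and c10: "c 1 0 = 0" and c01: "c 0 1 = 0"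
    and \<gamma>: "(\<gamma> has_vector_derivative w) (at t0)" "w \<noteq> 0" "\<gamma> t0 = p"
    and zero: "\<And>t. \<psi> (\<gamma> t) = 0" and near: "\<And>t. dist q p \<le> dist q (\<gamma> t)" and "q \<noteq> p"
  shows "((fst q - fst p) / dist q p)^2 + ((snd q - snd p) / dist q p)^2 = 1"
    and "quad_part c ((fst q - fst p) / dist q p) ((snd q - snd p) / dist q p) = c 2 0 + c 0 2"
proof -
  have Qw: "quad_part c (fst w) (snd w) = 0"
    by (rule quad_part_tangent_eq_0[OF AS r \<psi> c00 c10 c01 \<gamma>(1,3) zero])
  have "inner (\<gamma> t0 - q) w = 0"
    by (rule inner_tangent_eq_0_at_nearest_point[OF \<gamma>(1)]) (use near \<gamma>(3) in simp)
  then have "(fst q - fst p) * fst w + (snd q - snd p) * snd w = 0"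
    using \<gamma>(3) by (cases w, cases p, cases q) (simp add: inner_Pair algebra_simps)
  then have orth: "(fst q - fst p) / dist q p * fst w + (snd q - snd p) / dist q p * snd w = 0"
    by (simp add: add_divide_distrib[symmetric])
  have "((fst q - fst p) / dist q p)^2 + ((snd q - snd p) / dist q p)^2
        = ((fst q - fst p)^2 + (snd q - snd p)^2) / dist q p ^ 2"
    by (simp add: power_divide add_divide_distrib)
  also have "(fst q - fst p)^2 + (snd q - snd p)^2 = dist q p ^ 2"
    by (cases q, cases p) (simp add: dist_Pair_Pair dist_real_def)
  finally show unit: "((fst q - fst p) / dist q p)^2 + ((snd q - snd p) / dist q p)^2 = 1"
    using \<open>q \<noteq> p\<close> by simp
  have "fst w \<noteq> 0 \<or> snd w \<noteq> 0" using \<gamma>(2) by (auto simp: prod_eq_iff)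
  then show "quad_part c ((fst q - fst p) / dist q p) ((snd q - snd p) / dist q p) = c 2 0 + c 0 2"
    by (rule quad_part_unit_normal[OF Qw _ orth unit])
qed

section \<open>Restriction to the inner normal\<close>

lemma dpowser_low_coeffs_eq_0:
  fixes \<psi> :: "real \<times> real \<Rightarrow> real"
  assumes AS: "dpowser_abs_summable c \<rho>" and r: "\<rho> > 0"
    and \<psi>: "\<And>x y. \<bar>x\<bar> < \<rho> \<Longrightarrow> \<bar>y\<bar> < \<rho> \<Longrightarrow> \<psi> (fst p + x, snd p + y) = dpowser c x y"
    and zero: "\<psi> p = 0" and grad: "(\<psi> has_derivative (\<lambda>_. 0)) (at p)"
  shows "c 0 0 = 0" "c 1 0 = 0" "c 0 1 = 0"
proof -
  show "c 0 0 = 0" using \<psi>[of 0 0] r zero dpowser_0_0[OF AS r] by simp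
  have "line_coeff c 1 0 1 = 0" by (rule line_coeff_1_eq_0_if_critical[OF AS r \<psi> _ _ grad]) simp_all
  then show "c 1 0 = 0" unfolding line_coeff_1 by simp
  have "line_coeff c 0 1 1 = 0" by (rule line_coeff_1_eq_0_if_critical[OF AS r \<psi> _ _ grad]) simp_all
  then show "c 0 1 = 0" unfolding line_coeff_1 by simp
qed

lemma sums_line_restriction:
  fixes \<psi> :: "real \<times> real \<Rightarrow> real"
  assumes AS: "dpowser_abs_summable c \<rho>" and r: "\<rho> > 0"
    and \<psi>: "\<And>x y. \<bar>x\<bar> < \<rho> \<Longrightarrow> \<bar>y\<bar> < \<rho> \<Longrightarrow> \<psi> (fst p + x, snd p + y) = dpowser c x y"
    and v1: "\<bar>v1\<bar> \<le> 1" and v2: "\<bar>v2\<bar> \<le> 1" and t: "\<bar>t\<bar> \<le> \<rho>/2"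
  shows "(\<lambda>m. line_coeff c v1 v2 m * t^m) sums \<psi> (fst p + t * v1, snd p + t * v2)"
    and "(\<lambda>m. line_coeff (laplacian_coeff c) v1 v2 m * t^m) sums laplacian \<psi> (fst p + t * v1, snd p + t * v2)"
proof -
  have tv: "\<bar>t * v1\<bar> \<le> \<rho>/2" "\<bar>t * v2\<bar> \<le> \<rho>/2"
    using order_trans[OF mult_left_le[OF v1 abs_ge_zero] t] order_trans[OF mult_left_le[OF v2 abs_ge_zero] t]
    by (simp_all add: abs_mult)
  then have "\<bar>t * v1\<bar> < \<rho>" "\<bar>t * v2\<bar> < \<rho>" "\<bar>t\<bar> \<le> \<rho>" using t r by linarith+
  then show "(\<lambda>m. line_coeff c v1 v2 m * t^m) sums \<psi> (fst p + t * v1, snd p + t * v2)"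
    using sums_dpowser_line[OF AS v1 v2, of t] \<psi>[of "t * v1" "t * v2"] by simp
  show "(\<lambda>m. line_coeff (laplacian_coeff c) v1 v2 m * t^m) sums laplacian \<psi> (fst p + t * v1, snd p + t * v2)"
    using laplacian_dpowser[OF AS r \<psi> tv] sums_dpowser_line[OF dpowser_abs_summable_laplacian_coeff[OF AS r] v1 v2 t]
    by simp
qed

lemma puiseux_along_segment:
  fixes \<psi> :: "real \<times> real \<Rightarrow> real" and F :: "real \<Rightarrow> real"
  assumes AS: "dpowser_abs_summable c \<rho>" and r: "\<rho> > 0"
    and \<psi>: "\<And>x y. \<bar>x\<bar> < \<rho> \<Longrightarrow> \<bar>y\<bar> < \<rho> \<Longrightarrow> \<psi> (fst p + x, snd p + y) = dpowser c x y"
    and c00: "c 0 0 = 0" and c10: "c 1 0 = 0" and c01: "c 0 1 = 0"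
    and unit: "v1^2 + v2^2 = 1" and Qv: "quad_part c v1 v2 = c 2 0 + c 0 2" and \<delta>: "\<delta> > 0"
    and seg: "\<And>t. 0 < t \<Longrightarrow> t < \<delta> \<Longrightarrow>
       \<psi> (fst p + t * v1, snd p + t * v2) \<in> {0..1} \<and>
       laplacian \<psi> (fst p + t * v1, snd p + t * v2) = F (\<psi> (fst p + t * v1, snd p + t * v2))"
    and F: "continuous_on {0..1} F" and F0: "F 0 = 1"
  obtains a \<epsilon> where "\<epsilon> > 0" "a 0 = 1" "\<And>s. 0 \<le> s \<Longrightarrow> s < \<epsilon> \<Longrightarrow> (\<lambda>k. a k * sqrt s ^ k) sums F s"
proof -
  have "v1^2 \<le> 1" "v2^2 \<le> 1" using unit zero_le_power2[of v1] zero_le_power2[of v2] by linarith+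
  then have v1: "\<bar>v1\<bar> \<le> 1" and v2: "\<bar>v2\<bar> \<le> 1" by (simp_all add: abs_square_le_1)
  define e where "e = line_coeff c v1 v2"
  define f where "f = line_coeff (laplacian_coeff c) v1 v2"
  have r2: "\<rho>/2 > 0" and r2': "\<rho>/2 \<le> \<rho>" using r by simp_all
  have se: "summable (\<lambda>m. \<bar>e m\<bar> * (\<rho>/2)^m)"
  proof (rule summable_comparison_test[OF _ summable_abs_line_coeff[OF AS v1 v2]], intro exI allI impI)
    show "norm (\<bar>e m\<bar> * (\<rho>/2)^m) \<le> \<bar>line_coeff c v1 v2 m\<bar> * \<rho>^m" for m
      using r power_mono[OF r2'] by (simp add: e_def abs_mult mult_left_mono)
  qed (use r in simp)
  have sf: "summable (\<lambda>m. \<bar>f m\<bar> * (\<rho>/2)^m)"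
    unfolding f_def using r
    by (intro summable_abs_line_coeff[OF dpowser_abs_summable_laplacian_coeff[OF AS r] v1 v2]) simp
  define \<delta>' where "\<delta>' = min \<delta> (\<rho>/2)"
  have \<delta>': "\<delta>' > 0" using \<delta> r by (simp add: \<delta>'_def)
  have comp: "(\<Sum>m. e m * t^m) \<in> {0..1} \<and> F (\<Sum>m. e m * t^m) = (\<Sum>m. f m * t^m)"
    if "0 < t" "t < \<delta>'" for t
    using seg[of t] sums_line_restriction[OF AS r \<psi> v1 v2, of t] that
    by (simp add: \<delta>'_def e_def f_def sums_iff)
  have e0: "e 0 = 0" by (simp add: e_def line_coeff_0 c00)
  have "f 0 = 1"
    using const_coeff_eq_of_comp_powser[OF r2 se sf e0 \<delta>' F comp] F0 by simp
  then have "c 2 0 + c 0 2 = 1/2" by (simp add: f_def line_coeff_0 laplacian_coeff_0_0)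
  then have e2: "e 2 > 0" using Qv by (simp add: e_def line_coeff_2)
  have e1: "e 1 = 0" unfolding e_def line_coeff_1 c10 c01 by simp
  show ?thesis
  proof (rule puiseux_of_comp_powser[OF r2 se sf e0 e1 e2 \<delta>'])
    show "F (\<Sum>m. e m * t^m) = (\<Sum>m. f m * t^m)" if "0 < t" "t < \<delta>'" for t
      using comp[OF that] by blast
    show "F 0 = f 0" using F0 \<open>f 0 = 1\<close> by simp
    fix a \<epsilon>
    assume "\<epsilon> > 0" "a 0 = f 0" "\<And>s. 0 \<le> s \<Longrightarrow> s < \<epsilon> \<Longrightarrow> (\<lambda>k. a k * sqrt s ^ k) sums F s"
    then show thesis using that[of \<epsilon> a] \<open>f 0 = 1\<close> by simp
  qed
qed

theorem mainTheorem14: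
  fixes \<Omega> :: "(real \<times> real) set"
    and \<psi> :: "real \<times> real \<Rightarrow> real"
    and F :: "real \<Rightarrow> real"
  assumes dom: "open \<Omega>" "connected \<Omega>" "bounded \<Omega>" "simply_connected \<Omega>"
    and bdry: "analytic_boundary \<Omega>"
    and psi_an: "\<forall>p \<in> closure \<Omega>. real_analytic_at2 \<psi> p"
    and psi_nonneg: "\<forall>p \<in> closure \<Omega>. 0 \<le> \<psi> p"
    and psi_le1: "\<forall>p \<in> \<Omega>. \<psi> p \<le> 1"
    and pde: "\<forall>p \<in> \<Omega>. laplacian \<psi> p = F (\<psi> p)"
    and F_cont: "continuous_on {0..1} F"
    and F_an: "\<forall>s \<in> {0<..<1}. real_analytic_at F s"
    and F_not_an: "\<not> real_analytic_at_0_right F"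
    and F0: "F 0 = 1"
    and bc_val: "\<forall>p \<in> frontier \<Omega>. \<psi> p = 0"
    and bc_grad: "\<forall>p \<in> frontier \<Omega>. (\<psi> has_derivative (\<lambda>_. 0)) (at p)"
  shows "\<exists>a :: nat \<Rightarrow> real. \<exists>\<epsilon> > 0.
           a 0 = 1 \<and> (\<exists>k. odd k \<and> a k \<noteq> 0) \<and>
           (\<forall>s. 0 \<le> s \<and> s < \<epsilon> \<longrightarrow> (\<lambda>k. a k * sqrt s ^ k) sums F s)"
proof -
  obtain q p \<gamma> t0 w where p: "p \<in> frontier \<Omega>" and R: "dist q p > 0"
    and seg: "\<And>t. 0 < t \<Longrightarrow> t < dist q p \<Longrightarrow> p + (t / dist q p) *\<^sub>R (q - p) \<in> \<Omega>"
    and \<gamma>_fr: "\<And>t. \<gamma> t \<in> frontier \<Omega>" and near: "\<And>t. dist q p \<le> dist q (\<gamma> t)"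
    and \<gamma>: "(\<gamma> has_vector_derivative w) (at t0)" "w \<noteq> 0" "\<gamma> t0 = p"
    using boundary_point_with_interior_ball[OF dom(1) bdry] by metis
  have "p \<in> closure \<Omega>" using p by (simp add: frontier_def)
  then obtain c \<rho> where r: "\<rho> > 0" and AS: "dpowser_abs_summable c \<rho>"
    and \<psi>: "\<And>x y. \<bar>x\<bar> < \<rho> \<Longrightarrow> \<bar>y\<bar> < \<rho> \<Longrightarrow> \<psi> (fst p + x, snd p + y) = dpowser c x y"
    using psi_an real_analytic_at2_dpowser by blast
  note c = dpowser_low_coeffs_eq_0[OF AS r \<psi> bspec[OF bc_val p] bspec[OF bc_grad p]]
  have zero: "\<psi> (\<gamma> t) = 0" for t using bc_val \<gamma>_fr by simp
  define v1 where "v1 = (fst q - fst p) / dist q p"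
  define v2 where "v2 = (snd q - snd p) / dist q p"
  have "q \<noteq> p" using R by auto
  note normal = quad_part_inner_normal[OF AS r \<psi> c \<gamma> zero near this, folded v1_def v2_def]
  have restr: "\<psi> (fst p + t * v1, snd p + t * v2) \<in> {0..1} \<and>
      laplacian \<psi> (fst p + t * v1, snd p + t * v2) = F (\<psi> (fst p + t * v1, snd p + t * v2))"
    if "0 < t" "t < dist q p" for t
  proof -
    have "(fst p + t * v1, snd p + t * v2) = p + (t / dist q p) *\<^sub>R (q - p)"
      by (simp add: v1_def v2_def prod_eq_iff algebra_simps flip: add_divide_distrib)
    also have "\<dots> \<in> \<Omega>" by (rule seg[OF that])
    finally have x: "(fst p + t * v1, snd p + t * v2) \<in> \<Omega>" .
    then show ?thesis
      using bspec[OF psi_nonneg subsetD[OF closure_subset x]] bspec[OF psi_le1 x] bspec[OF pde x] by simp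
  qed
  show ?thesis
  proof (rule puiseux_along_segment[OF AS r \<psi> c normal R restr F_cont F0])
    fix a \<epsilon>
    assume "\<epsilon> > 0" "a 0 = 1" and S: "\<And>s. 0 \<le> s \<Longrightarrow> s < \<epsilon> \<Longrightarrow> (\<lambda>k. a k * sqrt s ^ k) sums F s"
    with odd_coeff_nonzero_if_not_analytic[OF _ S F_not_an] show ?thesis
      by (intro exI[of _ a] exI[of _ \<epsilon>]) simp
  qed
qed

end
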